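(* For $a,q>0$, $n\ge1$ and $0\le i,j\le n-1$, $$\frac{Z^{\mathrm{diag}}(i,j,a,q,n)}{Z^{\mathrm{diag}}_n(1,a,q)}=q^{i+j+1}\Bigg(\sum_{\substack{k,l\in\{0,1\}\\(i-k,j-l)\ne(-1,-1)}}a^{k+l}\frac{Z^{\mathrm{diag}}(i-k,j-l,aq,q,n-1)}{(1+a^2q)Z^{\mathrm{diag}}_{n-1}(1,aq,q)}+\frac{a\,\mathbb{I}_{(i,j)=(0,0),\,n\ge1}}{1+a^2q}\Bigg).$$
   Context: Aztec diamond of size $n$: white vertices $\{(x_1,x_2): x_1\text{ odd},\ x_2\text{ even},\ 1\le x_1\le 2n-1,\ 0\le x_2\le 2n\}$, black vertices $\{(x_1,x_2): x_1\text{ even},\ x_2\text{ odd},\ 0\le x_1\le 2n,\ 1\le x_2\le 2n-1\}$, adjacency when the difference is $\pm(1,1)$ or $\pm(-1,1)$. Each edge lies on exactly one face centered at $(2n-2k-1,2n-2l-1)$, $0\le k,l\le n-1$. The $q^{\mathrm{diag}}$ weighting with parameters $b,a,q$: the edges $\{(2n-2k-2,2n-2l-1),(2n-2k-1,2n-2l)\}$ and $\{(2n-2k-1,2n-2l-2),(2n-2k,2n-2l-1)\}$ get weight $b$, the edge $\{(2n-2k-1,2n-2l),(2n-2k,2n-2l-1)\}$ gets weight $aq^{-2\min(k,l)}$, and the edge $\{(2n-2k-2,2n-2l-1),(2n-2k-1,2n-2l-2)\}$ gets weight $aq^{2\min(k,l)+1}$. $Z^{\mathrm{diag}}_n(b,a,q)$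 is the sum over perfect matchings of products of weights ($Z^{\mathrm{diag}}_0=1$). $Z^{\mathrm{diag}}(i,j,a,q,n)$ is the same with $b=1$ for the graph with vertices $(2n-2i-1,2n)$ and $(2n,2n-2j-1)$ removed, and is $0$ unless $i,j\in\{0,\dots,n-1\}$. $\mathbb{I}$ is an indicator. *)

theory Defs
  imports Complex_Main
begin

type_synonym vtx = "int \<times> int"

definition aztec_white :: "nat \<Rightarrow> vtx set" where
  "aztec_white n = {(x1, x2). odd x1 \<and> even x2 \<and> 1 \<le> x1 \<and> x1 \<le> 2 * int n - 1
                      \<and> 0 \<le> x2 \<and> x2 \<le> 2 * int n}"

definition aztec_black :: "nat \<Rightarrow> vtx set" where
  "aztec_black n = {(x1, x2). even x1 \<and> odd x2 \<and> 0 \<le> x1 \<and> x1 \<le> 2 * int n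
                      \<and> 1 \<le> x2 \<and> x2 \<le> 2 * int n - 1}"

definition adj :: "vtx \<Rightarrow> vtx \<Rightarrow> bool" where
  "adj w b \<longleftrightarrow> (fst b - fst w, snd b - snd w) \<in> {(1, 1), (-1, -1), (-1, 1), (1, -1)}"

definition perfect_matchings :: "vtx set \<Rightarrow> vtx set \<Rightarrow> (vtx \<times> vtx) set set" where
  "perfect_matchings W B =
     {M. M \<subseteq> {(w, b). w \<in> W \<and> b \<in> B \<and> adj w b}
         \<and> (\<forall>w\<in>W. \<exists>!b. (w, b) \<in> M) \<and> (\<forall>b\<in>B. \<exists>!w. (w, b) \<in> M)}"

text \<open>q^diag weight of edge (w,b) in the Aztec diamond of size n. The edge lies on the face
  centred at (fst w, snd b) = (2n-2k-1, 2n-2l-1).\<close>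
definition qdiag_weight :: "nat \<Rightarrow> real \<Rightarrow> real \<Rightarrow> real \<Rightarrow> vtx \<times> vtx \<Rightarrow> real" where
  "qdiag_weight n bb a q e =
     (let w = fst e; b = snd e;
          k = (2 * int n - 1 - fst w) div 2; l = (2 * int n - 1 - snd b) div 2;
          m = min k l
      in if snd w = snd b + 1 \<and> fst b = fst w - 1 then bb
         else if snd w = snd b - 1 \<and> fst b = fst w + 1 then bb
         else if snd w = snd b + 1 \<and> fst b = fst w + 1 then a * q powi (- 2 * m)
         else if snd w = snd b - 1 \<and> fst b = fst w - 1 then a * q powi (2 * m + 1)
         else 0)"

definition Zdiag :: "nat \<Rightarrow> real \<Rightarrow> real \<Rightarrow> real \<Rightarrow> real" where
  "Zdiag n bb a q =
     (\<Sum>M\<in>perfect_matchings (aztec_white n) (aztec_black n). \<Prod>e\<in>M. qdiag_weight n bb a q e)"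

definition Zdiag_rem :: "int \<Rightarrow> int \<Rightarrow> real \<Rightarrow> real \<Rightarrow> nat \<Rightarrow> real" where
  "Zdiag_rem i j a q n =
     (if 0 \<le> i \<and> i \<le> int n - 1 \<and> 0 \<le> j \<and> j \<le> int n - 1 then
        (\<Sum>M\<in>perfect_matchings (aztec_white n - {(2 * int n - 2 * i - 1, 2 * int n)})
                                 (aztec_black n - {(2 * int n, 2 * int n - 2 * j - 1)}).
            \<Prod>e\<in>M. qdiag_weight n 1 a q e)
      else 0)"

end

(*
  Urban renewal performed on all n^2 faces of the Aztec diamond at once multiplies the partition
  function by the product of the face factors and leaves a graph on the interior vertices, to which
  the removed boundary vertices return.  For the q^diag weights every face factor is 1 + a^2 q, and
  after the shift by (-1,-1), which exchanges the colours, the interior vertices form the Aztec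
  diamond of size n - 1, with the renewed weights gauge equivalent to the q^diag weights for aq
  instead of a.  Removing u = (2n-2i-1, 2n) and r = (2n, 2n-2j-1) thus leaves u and r as the only
  extra vertices of the renewed graph.  Expanding along them, their interior neighbours are the
  preimages of the removed vertices i - k and j - l of the smaller diamond, and u and r are adjacent
  only for i = j = 0.  The gauge factors of u and r give q^(i+j+1) / (1 + a^2 q); all other factors
  cancel in the ratio.
*)

theory Submission
  imports Defs "HOL-Library.FuncSet"
begin

section \<open>Perfect matchings of bipartite graphs\<close>

definition pmatchings :: "'v set \<Rightarrow> 'v set \<Rightarrow> ('v \<times> 'v) set \<Rightarrow> ('v \<times> 'v) set set" where
  "pmatchings W B E = {M. M \<subseteq> {(w, b). w \<in> W \<and> b \<in> B \<and> (w, b) \<in> E}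
         \<and> (\<forall>w\<in>W. \<exists>!b. (w, b) \<in> M) \<and> (\<forall>b\<in>B. \<exists>!w. (w, b) \<in> M)}"

definition dimer_Z :: "'v set \<Rightarrow> 'v set \<Rightarrow> ('v \<times> 'v) set \<Rightarrow> ('v \<times> 'v \<Rightarrow> real) \<Rightarrow> real" where
  "dimer_Z W B E \<omega> = (\<Sum>M\<in>pmatchings W B E. \<Prod>e\<in>M. \<omega> e)"

lemma perfect_matchings_eq_pmatchings: "perfect_matchings W B = pmatchings W B {(w, b). adj w b}"
  unfolding perfect_matchings_def pmatchings_def by auto

lemma pmatchingsI:
  assumes "\<And>w b. (w, b) \<in> M \<Longrightarrow> w \<in> W \<and> b \<in> B \<and> (w, b) \<in> E"
    and "\<And>w. w \<in> W \<Longrightarrow> \<exists>!b. (w, b) \<in> M" and "\<And>b. b \<in> B \<Longrightarrow> \<exists>!w. (w, b) \<in> M"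
  shows "M \<in> pmatchings W B E"
  using assms unfolding pmatchings_def by auto

lemma pmatchingsD:
  assumes "M \<in> pmatchings W B E"
  shows "(w, b) \<in> M \<Longrightarrow> w \<in> W \<and> b \<in> B \<and> (w, b) \<in> E"
    and "w \<in> W \<Longrightarrow> \<exists>!b. (w, b) \<in> M" and "b \<in> B \<Longrightarrow> \<exists>!w. (w, b) \<in> M"
  using assms unfolding pmatchings_def by auto

lemma pmatchings_subset: "M \<in> pmatchings W B E \<Longrightarrow> M \<subseteq> W \<times> B"
  using pmatchingsD(1) by fast

lemma finite_pmatchings: "finite W \<Longrightarrow> finite B \<Longrightarrow> finite (pmatchings W B E)"
  by (rule finite_subset[of _ "Pow (W \<times> B)"]) (auto dest: pmatchings_subset)

lemma finite_pmatching: "M \<in> pmatchings W B E \<Longrightarrow> finite W \<Longrightarrow> finite B \<Longrightarrow> finite M"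
  using finite_subset[OF pmatchings_subset] by blast

lemma pmatchings_empty: "pmatchings {} {} E = {{}}"
  unfolding pmatchings_def by auto

lemma bij_betw_fst_pmatching:
  assumes "M \<in> pmatchings W B E" shows "bij_betw fst M W"
proof -
  have "inj_on fst M"
    by (rule inj_onI) (metis assms pmatchingsD prod.collapse)
  moreover have "fst ` M = W"
    using pmatchingsD[OF assms] by (force simp: image_iff)
  ultimately show ?thesis by (simp add: bij_betw_def)
qed

lemma bij_betw_snd_pmatching:
  assumes "M \<in> pmatchings W B E" shows "bij_betw snd M B"
proof -
  have "inj_on snd M"
    by (rule inj_onI) (metis assms pmatchingsD prod.collapse)
  moreover have "snd ` M = B"
    using pmatchingsD[OF assms] by (force simp: image_iff)
  ultimately show ?thesis by (simp add: bij_betw_def)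
qed

lemma dimer_Z_gauge:
  assumes "\<And>w b. w \<in> W \<Longrightarrow> b \<in> B \<Longrightarrow> (w, b) \<in> E \<Longrightarrow> \<omega> (w, b) = c w * d b * \<omega>' (w, b)"
  shows "dimer_Z W B E \<omega> = (\<Prod>w\<in>W. c w) * (\<Prod>b\<in>B. d b) * dimer_Z W B E \<omega>'"
  unfolding dimer_Z_def sum_distrib_left
proof (rule sum.cong[OF refl])
  fix M assume M: "M \<in> pmatchings W B E"
  have "(\<Prod>e\<in>M. \<omega> e) = (\<Prod>e\<in>M. c (fst e) * d (snd e) * \<omega>' e)"
    by (rule prod.cong[OF refl]) (metis assms pmatchingsD(1)[OF M] prod.collapse)
  also have "\<dots> = (\<Prod>e\<in>M. c (fst e)) * (\<Prod>e\<in>M. d (snd e)) * (\<Prod>e\<in>M. \<omega>' e)"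
    by (simp add: prod.distrib)
  also have "\<dots> = (\<Prod>w\<in>W. c w) * (\<Prod>b\<in>B. d b) * (\<Prod>e\<in>M. \<omega>' e)"
    using prod.reindex_bij_betw[OF bij_betw_fst_pmatching[OF M], of c]
      prod.reindex_bij_betw[OF bij_betw_snd_pmatching[OF M], of d] by simp
  finally show "(\<Prod>e\<in>M. \<omega> e) = (\<Prod>w\<in>W. c w) * (\<Prod>b\<in>B. d b) * (\<Prod>e\<in>M. \<omega>' e)" .
qed

lemma pmatchings_swap:
  assumes M: "M \<in> pmatchings W B E"
  shows "prod.swap ` M \<in> pmatchings B W (prod.swap ` E)"
proof (rule pmatchingsI)
  show "(b, w) \<in> prod.swap ` M \<Longrightarrow> b \<in> B \<and> w \<in> W \<and> (b, w) \<in> prod.swap ` E" for b w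
    using pmatchingsD(1)[OF M, of w b] by simp
  show "b \<in> B \<Longrightarrow> \<exists>!w. (b, w) \<in> prod.swap ` M" for b
    using pmatchingsD(3)[OF M] by simp
  show "w \<in> W \<Longrightarrow> \<exists>!b. (b, w) \<in> prod.swap ` M" for w
    using pmatchingsD(2)[OF M] by simp
qed

lemma dimer_Z_transpose: "dimer_Z W B E \<omega> = dimer_Z B W (prod.swap ` E) (\<omega> \<circ> prod.swap)"
  unfolding dimer_Z_def
proof (rule sum.reindex_bij_witness[where i = "(`) prod.swap" and j = "(`) prod.swap"])
  fix M assume "M \<in> pmatchings B W (prod.swap ` E)"
  then show "prod.swap ` M \<in> pmatchings W B E"
    using pmatchings_swap[of M B W "prod.swap ` E"] by (simp add: image_image)
qed (auto simp: image_image pmatchings_swap prod.reindex)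

lemma pmatchings_map:
  assumes h: "inj h" and M: "M \<in> pmatchings W B E"
  shows "map_prod h h ` M \<in> pmatchings (h ` W) (h ` B) (map_prod h h ` E)"
proof (rule pmatchingsI)
  have mem_h: "(h x, h y) \<in> map_prod h h ` S \<longleftrightarrow> (x, y) \<in> S" for x y S
    using h by (auto dest: injD)
  show "\<And>w b. (w, b) \<in> map_prod h h ` M \<Longrightarrow> w \<in> h ` W \<and> b \<in> h ` B \<and> (w, b) \<in> map_prod h h ` E"
    using pmatchingsD(1)[OF M] by (auto simp: mem_h)
  show "\<exists>!b. (w, b) \<in> map_prod h h ` M" if w: "w \<in> h ` W" for w
  proof -
    obtain w0 where w0: "w = h w0" "w0 \<in> W" using w by blast
    obtain b0 where b0: "(w0, b0) \<in> M" "\<And>b. (w0, b) \<in> M \<Longrightarrow> b = b0"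
      using pmatchingsD(2)[OF M w0(2)] by (elim ex1E) blast
    show ?thesis
    proof (rule ex1I[of _ "h b0"])
      show "(w, h b0) \<in> map_prod h h ` M" using w0(1) b0(1) by (simp add: mem_h)
      fix b assume "(w, b) \<in> map_prod h h ` M"
      then obtain x y where "(x, y) \<in> M" "w = h x" "b = h y" by auto
      moreover have "x = w0" using \<open>w = h x\<close> w0(1) h by (simp add: inj_eq)
      ultimately show "b = h b0" using b0(2) by blast
    qed
  qed
  show "\<exists>!w. (w, b) \<in> map_prod h h ` M" if b: "b \<in> h ` B" for b
  proof -
    obtain b0 where b0: "b = h b0" "b0 \<in> B" using b by blast
    obtain w0 where w0: "(w0, b0) \<in> M" "\<And>w. (w, b0) \<in> M \<Longrightarrow> w = w0"
      using pmatchingsD(3)[OF M b0(2)] by (elim ex1E) blast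
    show ?thesis
    proof (rule ex1I[of _ "h w0"])
      show "(h w0, b) \<in> map_prod h h ` M" using w0(1) b0(1) by (simp add: mem_h)
      fix w assume "(w, b) \<in> map_prod h h ` M"
      then obtain x y where "(x, y) \<in> M" "w = h x" "b = h y" by auto
      moreover have "y = b0" using \<open>b = h y\<close> b0(1) h by (simp add: inj_eq)
      ultimately show "w = h w0" using w0(2) by blast
    qed
  qed
qed

lemma dimer_Z_bij_relabel:
  assumes "bij h"
  shows "dimer_Z (h ` W) (h ` B) (map_prod h h ` E) \<omega> = dimer_Z W B E (\<omega> \<circ> map_prod h h)"
  unfolding dimer_Z_def
proof (rule sum.reindex_bij_witness[where i = "(`) (map_prod h h)" and j = "(`) (map_prod (inv h) (inv h))"])
  have inv: "inv h (h x) = x" "h (inv h y) = y" for x y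
    using assms by (simp_all add: bij_is_inj bij_is_surj surj_f_inv_f)
  then have inv_prod: "map_prod (inv h) (inv h) (map_prod h h e) = e"
    "map_prod h h (map_prod (inv h) (inv h) e') = e'" for e e'
    by (simp_all add: map_prod_def split_beta)
  show "map_prod h h ` map_prod (inv h) (inv h) ` M = M" for M
    by (simp add: image_image inv_prod)
  show "map_prod (inv h) (inv h) ` map_prod h h ` M = M" for M
    by (simp add: image_image inv_prod)
  show "map_prod h h ` M \<in> pmatchings (h ` W) (h ` B) (map_prod h h ` E)"
    if "M \<in> pmatchings W B E" for M
    by (rule pmatchings_map[OF bij_is_inj[OF assms] that])
  show "map_prod (inv h) (inv h) ` M \<in> pmatchings W B E"
    if M: "M \<in> pmatchings (h ` W) (h ` B) (map_prod h h ` E)" for M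
    using pmatchings_map[OF bij_is_inj[OF bij_imp_bij_inv[OF assms]] M]
    by (simp add: image_image inv inv_prod)
  show "(\<Prod>e\<in>map_prod (inv h) (inv h) ` M. (\<omega> \<circ> map_prod h h) e) = (\<Prod>e\<in>M. \<omega> e)" for M
    by (subst prod.reindex) (auto intro!: inj_on_inverseI[where g = "map_prod h h"] simp: inv_prod inv)
qed

lemma pmatchings_insert:
  assumes M: "M \<in> pmatchings (W - {u}) (B - {b}) E" and "u \<in> W" "b \<in> B" "(u, b) \<in> E"
  shows "insert (u, b) M \<in> pmatchings W B E"
proof (rule pmatchingsI)
  have u_free: "(u, y) \<notin> M" "(x, b) \<notin> M" for x y
    using pmatchingsD(1)[OF M] by blast+
  show "(x, y) \<in> insert (u, b) M \<Longrightarrow> x \<in> W \<and> y \<in> B \<and> (x, y) \<in> E" for x y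
    using pmatchingsD(1)[OF M] assms by auto
  show "\<exists>!y. (x, y) \<in> insert (u, b) M" if "x \<in> W" for x
    using pmatchingsD(2)[OF M] u_free that by (cases "x = u") auto
  show "\<exists>!x. (x, y) \<in> insert (u, b) M" if "y \<in> B" for y
    using pmatchingsD(3)[OF M] u_free that by (cases "y = b") auto
qed

lemma pmatchings_remove:
  assumes M: "M \<in> pmatchings W B E" and ub: "(u, b) \<in> M"
  shows "M - {(u, b)} \<in> pmatchings (W - {u}) (B - {b}) E"
proof (rule pmatchingsI)
  have "u \<in> W" "b \<in> B" using pmatchingsD(1)[OF M ub] by auto
  then have only: "(u, y) \<in> M \<Longrightarrow> y = b" "(x, b) \<in> M \<Longrightarrow> x = u" for x y
    using pmatchingsD(2,3)[OF M] ub by blast+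
  show "(x, y) \<in> M - {(u, b)} \<Longrightarrow> x \<in> W - {u} \<and> y \<in> B - {b} \<and> (x, y) \<in> E" for x y
    using pmatchingsD(1)[OF M] only by blast
  show "x \<in> W - {u} \<Longrightarrow> \<exists>!y. (x, y) \<in> M - {(u, b)}" for x
    using pmatchingsD(2)[OF M] by auto
  show "y \<in> B - {b} \<Longrightarrow> \<exists>!x. (x, y) \<in> M - {(u, b)}" for y
    using pmatchingsD(3)[OF M] by auto
qed

lemma pmatchings_containing_edge:
  assumes u: "u \<in> W" and b: "b \<in> B" and ub: "(u, b) \<in> E"
  shows "{M \<in> pmatchings W B E. (u, b) \<in> M} = insert (u, b) ` pmatchings (W - {u}) (B - {b}) E"
proof (intro equalityI subsetI)
  fix M assume "M \<in> {M \<in> pmatchings W B E. (u, b) \<in> M}"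
  then have M: "M \<in> pmatchings W B E" "(u, b) \<in> M" by auto
  then have "M = insert (u, b) (M - {(u, b)})" by blast
  with pmatchings_remove[OF M] show "M \<in> insert (u, b) ` pmatchings (W - {u}) (B - {b}) E" by blast
next
  fix M assume "M \<in> insert (u, b) ` pmatchings (W - {u}) (B - {b}) E"
  then show "M \<in> {M \<in> pmatchings W B E. (u, b) \<in> M}" using pmatchings_insert[OF _ u b ub] by blast
qed

lemma sum_pmatchings_containing_edge:
  assumes fin: "finite W" "finite B" and "u \<in> W" "b \<in> B" "(u, b) \<in> E"
  shows "(\<Sum>M\<in>{M \<in> pmatchings W B E. (u, b) \<in> M}. \<Prod>e\<in>M. \<omega> e) = \<omega> (u, b) * dimer_Z (W - {u}) (B - {b}) E \<omega>"
proof -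
  have fresh: "(u, b) \<notin> M" if "M \<in> pmatchings (W - {u}) (B - {b}) E" for M
    using pmatchingsD(1)[OF that] by blast
  have "inj_on (insert (u, b)) (pmatchings (W - {u}) (B - {b}) E)"
    by (rule inj_onI) (metis fresh insert_ident)
  then show ?thesis
    unfolding pmatchings_containing_edge[OF assms(3-)] dimer_Z_def sum_distrib_left
    by (simp add: sum.reindex fresh fin finite_pmatching)
qed

lemma dimer_Z_expand_white:
  assumes fin: "finite W" "finite B" and u: "u \<in> W"
  shows "dimer_Z W B E \<omega> = (\<Sum>b\<in>{b\<in>B. (u, b) \<in> E}. \<omega> (u, b) * dimer_Z (W - {u}) (B - {b}) E \<omega>)"
proof -
  let ?N = "{b\<in>B. (u, b) \<in> E}"
  let ?partner = "\<lambda>M. THE b. (u, b) \<in> M"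
  have partner: "?partner M = b \<longleftrightarrow> (u, b) \<in> M" if M: "M \<in> pmatchings W B E" for M b
  proof -
    obtain b0 where b0: "(u, b0) \<in> M" "\<And>b. (u, b) \<in> M \<Longrightarrow> b = b0"
      using pmatchingsD(2)[OF M u] by (elim ex1E) blast
    then have "?partner M = b0" by (blast intro: the_equality)
    then show ?thesis using b0 by blast
  qed
  have "?partner M \<in> ?N" if M: "M \<in> pmatchings W B E" for M
    using partner[OF M, of "?partner M"] pmatchingsD(1)[OF M, of u "?partner M"] by simp
  then have "dimer_Z W B E \<omega> = (\<Sum>b\<in>?N. \<Sum>M\<in>{M \<in> pmatchings W B E. ?partner M = b}. \<Prod>e\<in>M. \<omega> e)"
    unfolding dimer_Z_def using fin by (intro sum.group[symmetric] finite_pmatchings) auto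
  also have "\<dots> = (\<Sum>b\<in>?N. \<Sum>M\<in>{M \<in> pmatchings W B E. (u, b) \<in> M}. \<Prod>e\<in>M. \<omega> e)"
    using partner by (intro sum.cong refl) (metis (no_types, lifting) Collect_cong)
  also have "\<dots> = (\<Sum>b\<in>?N. \<omega> (u, b) * dimer_Z (W - {u}) (B - {b}) E \<omega>)"
    using fin u by (intro sum.cong refl) (simp add: sum_pmatchings_containing_edge)
  finally show ?thesis .
qed

lemma dimer_Z_expand_black:
  assumes fin: "finite W" "finite B" and r: "r \<in> B"
  shows "dimer_Z W B E \<omega> = (\<Sum>w\<in>{w\<in>W. (w, r) \<in> E}. \<omega> (w, r) * dimer_Z (W - {w}) (B - {r}) E \<omega>)"
proof -
  have "dimer_Z W B E \<omega> = dimer_Z B W (prod.swap ` E) (\<omega> \<circ> prod.swap)"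
    by (rule dimer_Z_transpose)
  also have "\<dots> = (\<Sum>w\<in>{w\<in>W. (r, w) \<in> prod.swap ` E}. (\<omega> \<circ> prod.swap) (r, w)
      * dimer_Z (B - {r}) (W - {w}) (prod.swap ` E) (\<omega> \<circ> prod.swap))"
    by (rule dimer_Z_expand_white) (use fin r in auto)
  also have "\<dots> = (\<Sum>w\<in>{w\<in>W. (w, r) \<in> E}. \<omega> (w, r) * dimer_Z (W - {w}) (B - {r}) E \<omega>)"
    by (simp add: dimer_Z_transpose[of "W - _" "B - _"])
  finally show ?thesis .
qed

lemma dimer_Z_insert_insert:
  assumes fin: "finite W" "finite B" and "u \<notin> W" "r \<notin> B"
  shows "dimer_Z (insert u W) (insert r B) E \<omega> =
     (\<Sum>b\<in>{b\<in>B. (u, b) \<in> E}. \<Sum>w\<in>{w\<in>W. (w, r) \<in> E}. \<omega> (u, b) * \<omega> (w, r) * dimer_Z (W - {w}) (B - {b}) E \<omega>)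
     + (if (u, r) \<in> E then \<omega> (u, r) * dimer_Z W B E \<omega> else 0)"
proof -
  have inner: "dimer_Z W (insert r B - {b}) E \<omega>
      = (\<Sum>w\<in>{w\<in>W. (w, r) \<in> E}. \<omega> (w, r) * dimer_Z (W - {w}) (B - {b}) E \<omega>)" if "b \<in> B" for b
  proof -
    have "insert r B - {b} = insert r (B - {b})" "insert r (B - {b}) - {r} = B - {b}"
      using that \<open>r \<notin> B\<close> by auto
    moreover have "dimer_Z W (insert r (B - {b})) E \<omega> = (\<Sum>w\<in>{w\<in>W. (w, r) \<in> E}.
        \<omega> (w, r) * dimer_Z (W - {w}) (insert r (B - {b}) - {r}) E \<omega>)"
      by (rule dimer_Z_expand_black) (use fin in auto)
    ultimately show ?thesis by simp
  qed
  have "dimer_Z (insert u W) (insert r B) E \<omega>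
      = (\<Sum>b\<in>{b\<in>insert r B. (u, b) \<in> E}. \<omega> (u, b) * dimer_Z W (insert r B - {b}) E \<omega>)"
    using dimer_Z_expand_white[of "insert u W" "insert r B" u] fin \<open>u \<notin> W\<close> by simp
  also have "\<dots> = (\<Sum>b\<in>{b\<in>B. (u, b) \<in> E}. \<omega> (u, b) * dimer_Z W (insert r B - {b}) E \<omega>)
      + (if (u, r) \<in> E then \<omega> (u, r) * dimer_Z W B E \<omega> else 0)"
  proof (cases "(u, r) \<in> E")
    case True
    then have "{b\<in>insert r B. (u, b) \<in> E} = insert r {b\<in>B. (u, b) \<in> E}" by auto
    then show ?thesis using True fin \<open>r \<notin> B\<close> by simp
  next
    case False
    then have "{b\<in>insert r B. (u, b) \<in> E} = {b\<in>B. (u, b) \<in> E}" by auto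
    then show ?thesis using False by simp
  qed
  also have "\<dots> = (\<Sum>b\<in>{b\<in>B. (u, b) \<in> E}. \<Sum>w\<in>{w\<in>W. (w, r) \<in> E}. \<omega> (u, b) * \<omega> (w, r) * dimer_Z (W - {w}) (B - {b}) E \<omega>)
      + (if (u, r) \<in> E then \<omega> (u, r) * dimer_Z W B E \<omega> else 0)"
    by (simp add: inner sum_distrib_left mult.assoc)
  finally show ?thesis .
qed

lemma dimer_Z_empty: "dimer_Z {} {} E \<omega> = 1"
  unfolding dimer_Z_def pmatchings_empty by simp

lemma dimer_Z_singleton:
  assumes "(w, b) \<in> E" shows "dimer_Z {w} {b} E \<omega> = \<omega> (w, b)"
proof -
  have "{b' \<in> {b}. (w, b') \<in> E} = {b}" using assms by auto
  then show ?thesis using dimer_Z_expand_white[of "{w}" "{b}" w E \<omega>] by (simp add: dimer_Z_empty)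
qed

lemma dimer_Z_card_neq:
  assumes "finite W" "finite B" "card W \<noteq> card B"
  shows "dimer_Z W B E \<omega> = 0"
proof -
  have "M \<notin> pmatchings W B E" for M
    using bij_betw_same_card[OF bij_betw_fst_pmatching[of M W B E]]
      bij_betw_same_card[OF bij_betw_snd_pmatching[of M W B E]] assms(3) by auto
  then have "pmatchings W B E = {}" by blast
  then show ?thesis unfolding dimer_Z_def by simp
qed

lemma dimer_Z_square:
  assumes "w1 \<noteq> w2" "b1 \<noteq> b2" and E: "{w1, w2} \<times> {b1, b2} \<subseteq> E"
  shows "dimer_Z {w1, w2} {b1, b2} E \<omega> = \<omega> (w1, b1) * \<omega> (w2, b2) + \<omega> (w1, b2) * \<omega> (w2, b1)"
proof -
  have "{w1, w2} - {w1} = {w2}" "{b1, b2} - {b1} = {b2}" "{b1, b2} - {b2} = {b1}"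
    "{b \<in> {b1, b2}. (w1, b) \<in> E} = {b1, b2}"
    using assms by auto
  then show ?thesis
    using dimer_Z_expand_white[of "{w1, w2}" "{b1, b2}" w1 E \<omega>] E assms(2)
    by (simp add: dimer_Z_singleton)
qed

text \<open>Urban renewal on one face: W and B are the corners matched inside the face; after the move
  exactly the other corners are, with the weights of the opposite edges divided by D.\<close>
lemma dimer_Z_urban_renewal:
  assumes distinct: "w1 \<noteq> w2" "b1 \<noteq> b2" and E: "{w1, w2} \<times> {b1, b2} \<subseteq> E"
    and sub: "W \<subseteq> {w1, w2}" "B \<subseteq> {b1, b2}"
    and D: "D = \<omega> (w1, b1) * \<omega> (w2, b2) + \<omega> (w1, b2) * \<omega> (w2, b1)" "D \<noteq> 0"
    and \<omega>': "\<omega>' (w1, b1) = \<omega> (w2, b2) / D" "\<omega>' (w2, b2) = \<omega> (w1, b1) / D"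
      "\<omega>' (w1, b2) = \<omega> (w2, b1) / D" "\<omega>' (w2, b1) = \<omega> (w1, b2) / D"
  shows "dimer_Z W B E \<omega> = D * dimer_Z ({w1, w2} - W) ({b1, b2} - B) E \<omega>'"
proof -
  have "dimer_Z {w1, w2} {b1, b2} E \<omega>' = (\<omega> (w2, b2) * \<omega> (w1, b1) + \<omega> (w2, b1) * \<omega> (w1, b2)) / (D * D)"
    unfolding dimer_Z_square[OF distinct E] \<omega>' by (simp add: add_divide_distrib)
  then have renewed_square: "dimer_Z {w1, w2} {b1, b2} E \<omega>' = 1 / D"
    using D by (simp add: mult.commute)
  have square: "dimer_Z {w1, w2} {b1, b2} E \<omega> = D"
    using dimer_Z_square[OF distinct E] D(1) by simp
  have edges: "(w1, b1) \<in> E" "(w1, b2) \<in> E" "(w2, b1) \<in> E" "(w2, b2) \<in> E"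
    using E by auto
  have "W = {} \<or> W = {w1} \<or> W = {w2} \<or> W = {w1, w2}" "B = {} \<or> B = {b1} \<or> B = {b2} \<or> B = {b1, b2}"
    using sub by blast+
  then show ?thesis
    using distinct D(2) edges
    by (elim disjE) (simp_all add: dimer_Z_empty dimer_Z_singleton square renewed_square \<omega>'
        dimer_Z_card_neq insert_Diff_if)
qed

definition matched_label :: "('v \<times> 'v \<Rightarrow> 'f) \<Rightarrow> 'v set \<Rightarrow> 'v set \<Rightarrow> ('v \<times> 'v) set \<Rightarrow> 'v \<Rightarrow> 'f" where
  "matched_label \<phi> W B M =
     (\<lambda>v\<in>W \<union> B. if v \<in> W then \<phi> (v, THE b. (v, b) \<in> M) else \<phi> (THE w. (w, v) \<in> M, v))"

lemma matched_label_edge: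
  assumes M: "M \<in> pmatchings W B E" and disj: "W \<inter> B = {}" and e: "(w, b) \<in> M"
  shows "matched_label \<phi> W B M w = \<phi> (w, b)" "matched_label \<phi> W B M b = \<phi> (w, b)"
proof -
  have w: "w \<in> W" and b: "b \<in> B" using pmatchingsD(1)[OF M e] by auto
  have "(THE b. (w, b) \<in> M) = b" by (rule the1_equality[OF pmatchingsD(2)[OF M w] e])
  then show "matched_label \<phi> W B M w = \<phi> (w, b)" unfolding matched_label_def using w by simp
  have "(THE w. (w, b) \<in> M) = w" by (rule the1_equality[OF pmatchingsD(3)[OF M b] e])
  moreover have "b \<notin> W" using disj b by blast
  ultimately show "matched_label \<phi> W B M b = \<phi> (w, b)" unfolding matched_label_def using b by simp
qed

lemma pmatchings_label_class:
  fixes \<phi>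
  assumes M: "M \<in> pmatchings W B E" and disj: "W \<inter> B = {}"
  defines "\<alpha> \<equiv> matched_label \<phi> W B M"
  shows "{e\<in>M. \<phi> e = F} \<in> pmatchings {w\<in>W. \<alpha> w = F} {b\<in>B. \<alpha> b = F} {e\<in>E. \<phi> e = F}"
proof (rule pmatchingsI)
  note label = matched_label_edge[OF M disj, of _ _ \<phi>, folded \<alpha>_def]
  show "(w, b) \<in> {e\<in>M. \<phi> e = F} \<Longrightarrow>
      w \<in> {w\<in>W. \<alpha> w = F} \<and> b \<in> {b\<in>B. \<alpha> b = F} \<and> (w, b) \<in> {e\<in>E. \<phi> e = F}" for w b
    using pmatchingsD(1)[OF M, of w b] label[of w b] by auto
  show "\<exists>!b. (w, b) \<in> {e\<in>M. \<phi> e = F}" if w: "w \<in> {w\<in>W. \<alpha> w = F}" for w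
  proof -
    have "\<exists>!b. (w, b) \<in> M" using pmatchingsD(2)[OF M, of w] w by simp
    then obtain b0 where b0: "(w, b0) \<in> M" "\<And>b. (w, b) \<in> M \<Longrightarrow> b = b0"
      by (elim ex1E) blast
    have "\<phi> (w, b0) = F" using label(1)[OF b0(1)] w by simp
    then show ?thesis using b0 by (intro ex1I[of _ b0]) blast+
  qed
  show "\<exists>!w. (w, b) \<in> {e\<in>M. \<phi> e = F}" if b: "b \<in> {b\<in>B. \<alpha> b = F}" for b
  proof -
    have "\<exists>!w. (w, b) \<in> M" using pmatchingsD(3)[OF M, of b] b by simp
    then obtain w0 where w0: "(w0, b) \<in> M" "\<And>w. (w, b) \<in> M \<Longrightarrow> w = w0"
      by (elim ex1E) blast
    have "\<phi> (w0, b) = F" using label(2)[OF w0(1)] b by simp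
    then show ?thesis using w0 by (intro ex1I[of _ w0]) blast+
  qed
qed

lemma pmatchings_Union_label_classes:
  assumes Ms: "\<And>F. F \<in> I \<Longrightarrow> Ms F \<in> pmatchings {w\<in>W. \<alpha> w = F} {b\<in>B. \<alpha> b = F} {e\<in>E. \<phi> e = F}"
    and \<alpha>: "\<And>v. v \<in> W \<union> B \<Longrightarrow> \<alpha> v \<in> I"
  shows "(\<Union>F\<in>I. Ms F) \<in> pmatchings W B E"
proof (rule pmatchingsI)
  have mem: "w \<in> W \<and> b \<in> B \<and> (w, b) \<in> E \<and> \<alpha> w = F \<and> \<alpha> b = F"
    if "F \<in> I" "(w, b) \<in> Ms F" for F w b
    using pmatchingsD(1)[OF Ms[OF that(1)] that(2)] by auto
  then show "(w, b) \<in> (\<Union>F\<in>I. Ms F) \<Longrightarrow> w \<in> W \<and> b \<in> B \<and> (w, b) \<in> E" for w b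
    by blast
  show "\<exists>!b. (w, b) \<in> (\<Union>F\<in>I. Ms F)" if w: "w \<in> W" for w
  proof -
    have "\<exists>!b. (w, b) \<in> Ms (\<alpha> w)" using pmatchingsD(2)[OF Ms[OF \<alpha>], of w w] w by simp
    then obtain b0 where b0: "(w, b0) \<in> Ms (\<alpha> w)" "\<And>b. (w, b) \<in> Ms (\<alpha> w) \<Longrightarrow> b = b0"
      by (elim ex1E) blast
    show ?thesis
    proof (rule ex1I[of _ b0])
      show "(w, b0) \<in> (\<Union>F\<in>I. Ms F)" using b0(1) \<alpha> w by blast
      fix b assume "(w, b) \<in> (\<Union>F\<in>I. Ms F)"
      then obtain F where "F \<in> I" "(w, b) \<in> Ms F" by blast
      then have "(w, b) \<in> Ms (\<alpha> w)" using mem by simp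
      then show "b = b0" by (rule b0(2))
    qed
  qed
  show "\<exists>!w. (w, b) \<in> (\<Union>F\<in>I. Ms F)" if b: "b \<in> B" for b
  proof -
    have "\<exists>!w. (w, b) \<in> Ms (\<alpha> b)" using pmatchingsD(3)[OF Ms[OF \<alpha>], of b b] b by simp
    then obtain w0 where w0: "(w0, b) \<in> Ms (\<alpha> b)" "\<And>w. (w, b) \<in> Ms (\<alpha> b) \<Longrightarrow> w = w0"
      by (elim ex1E) blast
    show ?thesis
    proof (rule ex1I[of _ w0])
      show "(w0, b) \<in> (\<Union>F\<in>I. Ms F)" using w0(1) \<alpha> b by blast
      fix w assume "(w, b) \<in> (\<Union>F\<in>I. Ms F)"
      then obtain F where "F \<in> I" "(w, b) \<in> Ms F" by blast
      then have "(w, b) \<in> Ms (\<alpha> b)" using mem by simp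
      then show "w = w0" by (rule w0(2))
    qed
  qed
qed

lemma label_class_edgeD:
  assumes "M \<in> pmatchings {w\<in>W. \<alpha> w = F} {b\<in>B. \<alpha> b = F} {e\<in>E. \<phi> e = F}" and "e \<in> M"
  shows "\<phi> e = F" "\<alpha> (fst e) = F" "\<alpha> (snd e) = F"
  using pmatchingsD(1)[OF assms(1), of "fst e" "snd e"] assms(2) by auto

lemma matched_label_Union_label_classes:
  assumes Ms: "\<And>F. F \<in> I \<Longrightarrow> Ms F \<in> pmatchings {w\<in>W. \<alpha> w = F} {b\<in>B. \<alpha> b = F} {e\<in>E. \<phi> e = F}"
    and \<alpha>: "\<alpha> \<in> extensional (W \<union> B)" "\<And>v. v \<in> W \<union> B \<Longrightarrow> \<alpha> v \<in> I" and disj: "W \<inter> B = {}"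
  shows "matched_label \<phi> W B (\<Union>F\<in>I. Ms F) = \<alpha>"
proof
  let ?M = "\<Union>F\<in>I. Ms F"
  have M: "?M \<in> pmatchings W B E" by (rule pmatchings_Union_label_classes[OF Ms \<alpha>(2)])
  have edge: "\<phi> e = \<alpha> (fst e)" "\<phi> e = \<alpha> (snd e)" if "e \<in> ?M" for e
  proof -
    obtain F where "F \<in> I" "e \<in> Ms F" using \<open>e \<in> ?M\<close> by blast
    from label_class_edgeD[OF Ms[OF this(1)] this(2)] show "\<phi> e = \<alpha> (fst e)" "\<phi> e = \<alpha> (snd e)"
      by simp_all
  qed
  fix v
  consider (white) "v \<in> W" | (black) "v \<in> B" | (outside) "v \<notin> W \<union> B" by blast
  then show "matched_label \<phi> W B ?M v = \<alpha> v"
  proof cases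
    case white
    then obtain b where vb: "(v, b) \<in> ?M" using pmatchingsD(2)[OF M] by blast
    show ?thesis using matched_label_edge(1)[OF M disj vb, where \<phi> = \<phi>] edge(1)[OF vb] by simp
  next
    case black
    then obtain w where wv: "(w, v) \<in> ?M" using pmatchingsD(3)[OF M] by blast
    show ?thesis using matched_label_edge(2)[OF M disj wv, where \<phi> = \<phi>] edge(2)[OF wv] by simp
  next
    case outside
    then have "\<alpha> v = undefined" using \<alpha>(1) by (simp add: extensional_def)
    with outside show ?thesis unfolding matched_label_def by simp
  qed
qed

lemma restrict_Union_label_classes:
  assumes Ms: "\<And>F. F \<in> I \<Longrightarrow> Ms F \<in> pmatchings {w\<in>W. \<alpha> w = F} {b\<in>B. \<alpha> b = F} {e\<in>E. \<phi> e = F}"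
    and "Ms \<in> extensional I"
  shows "(\<lambda>G\<in>I. {e \<in> (\<Union>F\<in>I. Ms F). \<phi> e = G}) = Ms"
proof -
  have "{e \<in> (\<Union>F\<in>I. Ms F). \<phi> e = G} = Ms G" if G: "G \<in> I" for G
  proof (intro equalityI subsetI)
    fix e assume "e \<in> {e \<in> (\<Union>F\<in>I. Ms F). \<phi> e = G}"
    then obtain F where F: "F \<in> I" "e \<in> Ms F" and "\<phi> e = G" by blast
    with label_class_edgeD(1)[OF Ms[OF F(1)] F(2)] have "F = G" by simp
    with F show "e \<in> Ms G" by simp
  next
    fix e assume "e \<in> Ms G"
    with label_class_edgeD(1)[OF Ms[OF G] this] G show "e \<in> {e \<in> (\<Union>F\<in>I. Ms F). \<phi> e = G}" by blast
  qed
  then show ?thesis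
    using assms(2) by (auto simp: fun_eq_iff extensional_def)
qed

lemma prod_Union_label_classes:
  assumes Ms: "\<And>F. F \<in> I \<Longrightarrow> Ms F \<in> pmatchings {w\<in>W. \<alpha> w = F} {b\<in>B. \<alpha> b = F} {e\<in>E. \<phi> e = F}"
    and fin: "finite W" "finite B" "finite I"
  shows "(\<Prod>e\<in>(\<Union>F\<in>I. Ms F). \<omega> e) = (\<Prod>F\<in>I. \<Prod>e\<in>Ms F. \<omega> e)"
proof (rule prod.UNION_disjoint)
  show "\<forall>F\<in>I. \<forall>G\<in>I. F \<noteq> G \<longrightarrow> Ms F \<inter> Ms G = {}"
    using label_class_edgeD(2)[OF Ms] by blast
  show "\<forall>F\<in>I. finite (Ms F)"
    using finite_pmatching[OF Ms] fin by auto
qed (rule fin(3))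

lemma matched_label_PiE:
  assumes M: "M \<in> pmatchings W B E" and disj: "W \<inter> B = {}"
    and \<phi>A: "\<And>w b. w \<in> W \<Longrightarrow> b \<in> B \<Longrightarrow> (w, b) \<in> E \<Longrightarrow> \<phi> (w, b) \<in> A w \<inter> A b"
  shows "matched_label \<phi> W B M \<in> PiE (W \<union> B) A"
proof -
  have "matched_label \<phi> W B M v \<in> A v" if v: "v \<in> W \<union> B" for v
  proof (cases "v \<in> W")
    case True
    then obtain b where vb: "(v, b) \<in> M" using pmatchingsD(2)[OF M] by blast
    then have "\<phi> (v, b) \<in> A v" using pmatchingsD(1)[OF M vb] \<phi>A by blast
    then show ?thesis using matched_label_edge(1)[OF M disj vb, where \<phi> = \<phi>] by simp
  next
    case False
    then obtain w where wv: "(w, v) \<in> M" using v pmatchingsD(3)[OF M] by blast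
    then have "\<phi> (w, v) \<in> A v" using pmatchingsD(1)[OF M wv] \<phi>A by blast
    then show ?thesis using matched_label_edge(2)[OF M disj wv, where \<phi> = \<phi>] by simp
  qed
  then show ?thesis unfolding PiE_iff by (simp add: matched_label_def)
qed

text \<open>Sorting the edges of a perfect matching by a labelling \<phi> of the edges (in the application,
  the face an edge lies on) and recording at each vertex the label of its matched edge splits the
  partition function into independent factors, one per label.\<close>
lemma dimer_Z_sum_labellings:
  fixes \<phi> :: "'v \<times> 'v \<Rightarrow> 'f" and A :: "'v \<Rightarrow> 'f set"
  assumes fin: "finite W" "finite B" "finite I" and disj: "W \<inter> B = {}"
    and A: "\<And>v. v \<in> W \<union> B \<Longrightarrow> A v \<subseteq> I"
    and \<phi>A: "\<And>w b. w \<in> W \<Longrightarrow> b \<in> B \<Longrightarrow> (w, b) \<in> E \<Longrightarrow> \<phi> (w, b) \<in> A w \<inter> A b"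
  shows "dimer_Z W B E \<omega> =
    (\<Sum>\<alpha>\<in>PiE (W \<union> B) A. \<Prod>F\<in>I. dimer_Z {w\<in>W. \<alpha> w = F} {b\<in>B. \<alpha> b = F} {e\<in>E. \<phi> e = F} \<omega>)"
proof -
  let ?P = "PiE (W \<union> B) A"
  let ?Q = "\<lambda>\<alpha>. PiE I (\<lambda>F. pmatchings {w\<in>W. \<alpha> w = F} {b\<in>B. \<alpha> b = F} {e\<in>E. \<phi> e = F})"
  have finite_P: "finite ?P"
    using fin A by (intro finite_PiE) (auto intro: finite_subset)
  have "(\<Sum>\<alpha>\<in>?P. \<Prod>F\<in>I. dimer_Z {w\<in>W. \<alpha> w = F} {b\<in>B. \<alpha> b = F} {e\<in>E. \<phi> e = F} \<omega>)
      = (\<Sum>\<alpha>\<in>?P. \<Sum>Ms\<in>?Q \<alpha>. \<Prod>F\<in>I. \<Prod>e\<in>Ms F. \<omega> e)"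
    unfolding dimer_Z_def using fin by (intro sum.cong refl prod_sum_PiE) (auto intro: finite_pmatchings)
  also have "\<dots> = (\<Sum>(\<alpha>, Ms)\<in>Sigma ?P ?Q. \<Prod>F\<in>I. \<Prod>e\<in>Ms F. \<omega> e)"
    using fin finite_P by (intro sum.Sigma) (auto intro!: finite_PiE finite_pmatchings)
  also have "\<dots> = dimer_Z W B E \<omega>"
    unfolding dimer_Z_def
  proof (rule sum.reindex_bij_witness[where j = "\<lambda>(\<alpha>, Ms). \<Union>F\<in>I. Ms F"
        and i = "\<lambda>M. (matched_label \<phi> W B M, \<lambda>F\<in>I. {e\<in>M. \<phi> e = F})"])
    fix a assume "a \<in> Sigma ?P ?Q"
    then obtain \<alpha> Ms where a: "a = (\<alpha>, Ms)" and \<alpha>: "\<alpha> \<in> ?P" and Ms: "Ms \<in> ?Q \<alpha>" by blast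
    have \<alpha>I: "\<alpha> v \<in> I" if "v \<in> W \<union> B" for v
      using A[OF that] \<alpha> that by (auto simp: PiE_iff)
    have MsF: "Ms F \<in> pmatchings {w\<in>W. \<alpha> w = F} {b\<in>B. \<alpha> b = F} {e\<in>E. \<phi> e = F}" if "F \<in> I" for F
      using Ms that by auto
    have "\<alpha> \<in> extensional (W \<union> B)" "Ms \<in> extensional I" using \<alpha> Ms by (simp_all add: PiE_iff)
    show "(\<lambda>(\<alpha>, Ms). \<Union>F\<in>I. Ms F) a \<in> pmatchings W B E"
      using pmatchings_Union_label_classes[OF MsF \<alpha>I] a by simp
    show "(\<lambda>M. (matched_label \<phi> W B M, \<lambda>F\<in>I. {e\<in>M. \<phi> e = F})) ((\<lambda>(\<alpha>, Ms). \<Union>F\<in>I. Ms F) a) = a"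
      using matched_label_Union_label_classes[OF MsF \<open>\<alpha> \<in> extensional _\<close> \<alpha>I disj]
        restrict_Union_label_classes[OF MsF \<open>Ms \<in> extensional I\<close>] a by simp
    show "(\<Prod>e\<in>(\<lambda>(\<alpha>, Ms). \<Union>F\<in>I. Ms F) a. \<omega> e) = (case a of (\<alpha>, Ms) \<Rightarrow> \<Prod>F\<in>I. \<Prod>e\<in>Ms F. \<omega> e)"
      using prod_Union_label_classes[OF MsF fin] a by simp
  next
    fix M assume M: "M \<in> pmatchings W B E"
    have "\<phi> e \<in> I" if "e \<in> M" for e
      using that pmatchingsD(1)[OF M] \<phi>A A by (cases e) blast
    then show "(\<lambda>(\<alpha>, Ms). \<Union>F\<in>I. Ms F) ((\<lambda>M. (matched_label \<phi> W B M, \<lambda>F\<in>I. {e\<in>M. \<phi> e = F})) M) = M"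
      by auto
    show "(\<lambda>M. (matched_label \<phi> W B M, \<lambda>F\<in>I. {e\<in>M. \<phi> e = F})) M \<in> Sigma ?P ?Q"
      using matched_label_PiE[where \<phi> = \<phi> and A = A, OF M disj \<phi>A] pmatchings_label_class[OF M disj] by auto
  qed
  finally show ?thesis ..
qed

section \<open>Urban renewal on every face of the Aztec diamond\<close>

definition aztec_edges :: "(vtx \<times> vtx) set" where "aztec_edges = {(w, b). adj w b}"

abbreviation aztec_vertices :: "nat \<Rightarrow> vtx set" where
  "aztec_vertices n \<equiv> aztec_white n \<union> aztec_black n"

definition aztec_faces :: "nat \<Rightarrow> vtx set" where
  "aztec_faces n = {(x, y). odd x \<and> odd y \<and> 1 \<le> x \<and> x \<le> 2 * int n - 1 \<and> 1 \<le> y \<and> y \<le> 2 * int n - 1}"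

definition north :: "vtx \<Rightarrow> vtx" where "north F = (fst F, snd F + 1)"
definition south :: "vtx \<Rightarrow> vtx" where "south F = (fst F, snd F - 1)"
definition west :: "vtx \<Rightarrow> vtx" where "west F = (fst F - 1, snd F)"
definition east :: "vtx \<Rightarrow> vtx" where "east F = (fst F + 1, snd F)"

definition faces_at :: "nat \<Rightarrow> vtx \<Rightarrow> vtx set" where
  "faces_at n v = {F \<in> aztec_faces n. v \<in> {north F, south F, west F, east F}}"

definition face_of_edge :: "vtx \<times> vtx \<Rightarrow> vtx" where "face_of_edge e = (fst (fst e), snd (snd e))"

definition interior :: "nat \<Rightarrow> vtx \<Rightarrow> bool" where
  "interior n v = (if odd (fst v) then 2 \<le> snd v \<and> snd v \<le> 2 * int n - 2 else 2 \<le> fst v \<and> fst v \<le> 2 * int n - 2)"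

definition reflect :: "vtx \<Rightarrow> vtx \<Rightarrow> vtx" where "reflect v F = (2 * fst v - fst F, 2 * snd v - snd F)"

definition boundary_face :: "nat \<Rightarrow> vtx \<Rightarrow> vtx" where
  "boundary_face n v = (if odd (fst v) then (fst v, if snd v = 0 then 1 else snd v - 1)
                        else (if fst v = 0 then 1 else fst v - 1, snd v))"

lemma faces_at_white:
  assumes "(x,y) \<in> aztec_white n"
  shows "faces_at n (x,y) = {F. (F = (x,y-1) \<and> 2 \<le> y) \<or> (F = (x,y+1) \<and> y \<le> 2 * int n - 2)}"
proof (intro set_eqI iffI)
  fix F assume F: "F \<in> faces_at n (x,y)"
  obtain p s where Fps: "F = (p,s)" by (cases F)
  have h: "odd p" "odd s" "1 \<le> p" "p \<le> 2 * int n - 1" "1 \<le> s" "s \<le> 2 * int n - 1"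
    "(x,y) = (p, s+1) \<or> (x,y) = (p, s-1) \<or> (x,y) = (p-1,s) \<or> (x,y) = (p+1,s)"
    using F Fps unfolding faces_at_def aztec_faces_def north_def south_def west_def east_def by auto
  have a: "odd x" "even y" "1 \<le> x" "x \<le> 2 * int n - 1" "0 \<le> y" "y \<le> 2 * int n"
    using assms unfolding aztec_white_def by auto
  show "F \<in> {F. (F = (x,y-1) \<and> 2 \<le> y) \<or> (F = (x,y+1) \<and> y \<le> 2 * int n - 2)}"
    using h a Fps by (auto; presburger)
next
  fix F assume F: "F \<in> {F. (F = (x,y-1) \<and> 2 \<le> y) \<or> (F = (x,y+1) \<and> y \<le> 2 * int n - 2)}"
  have a: "odd x" "even y" "1 \<le> x" "x \<le> 2 * int n - 1" "0 \<le> y" "y \<le> 2 * int n"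
    using assms unfolding aztec_white_def by auto
  show "F \<in> faces_at n (x,y)"
    using F a unfolding faces_at_def aztec_faces_def north_def south_def west_def east_def by auto
qed

lemma faces_at_black:
  assumes "(x,y) \<in> aztec_black n"
  shows "faces_at n (x,y) = {F. (F = (x-1,y) \<and> 2 \<le> x) \<or> (F = (x+1,y) \<and> x \<le> 2 * int n - 2)}"
proof (intro set_eqI iffI)
  fix F assume F: "F \<in> faces_at n (x,y)"
  obtain p s where Fps: "F = (p,s)" by (cases F)
  have h: "odd p" "odd s" "1 \<le> p" "p \<le> 2 * int n - 1" "1 \<le> s" "s \<le> 2 * int n - 1"
    "(x,y) = (p, s+1) \<or> (x,y) = (p, s-1) \<or> (x,y) = (p-1,s) \<or> (x,y) = (p+1,s)"
    using F Fps unfolding faces_at_def aztec_faces_def north_def south_def west_def east_def by auto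
  have a: "even x" "odd y" "0 \<le> x" "x \<le> 2 * int n" "1 \<le> y" "y \<le> 2 * int n - 1"
    using assms unfolding aztec_black_def by auto
  show "F \<in> {F. (F = (x-1,y) \<and> 2 \<le> x) \<or> (F = (x+1,y) \<and> x \<le> 2 * int n - 2)}"
    using h a Fps by (auto; presburger)
next
  fix F assume F: "F \<in> {F. (F = (x-1,y) \<and> 2 \<le> x) \<or> (F = (x+1,y) \<and> x \<le> 2 * int n - 2)}"
  have a: "even x" "odd y" "0 \<le> x" "x \<le> 2 * int n" "1 \<le> y" "y \<le> 2 * int n - 1"
    using assms unfolding aztec_black_def by auto
  show "F \<in> faces_at n (x,y)"
    using F a unfolding faces_at_def aztec_faces_def north_def south_def west_def east_def by auto
qed

lemma aztec_white_black_disjoint: "aztec_white n \<inter> aztec_black n = {}"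
  unfolding aztec_white_def aztec_black_def by auto

lemma finite_aztec_white: "finite (aztec_white n)"
  by (rule finite_subset[of _ "{0..2 * int n} \<times> {0..2 * int n}"]) (auto simp: aztec_white_def)

lemma finite_aztec_black: "finite (aztec_black n)"
  by (rule finite_subset[of _ "{0..2 * int n} \<times> {0..2 * int n}"]) (auto simp: aztec_black_def)

lemma finite_aztec_faces: "finite (aztec_faces n)"
  by (rule finite_subset[of _ "{0..2 * int n} \<times> {0..2 * int n}"]) (auto simp: aztec_faces_def)

lemma faces_at_subset: "faces_at n v \<subseteq> aztec_faces n" unfolding faces_at_def by auto

lemma face_of_edge_faces_at:
  assumes w: "w \<in> aztec_white n" and b: "b \<in> aztec_black n" and e: "(w,b) \<in> aztec_edges"
  shows "face_of_edge (w,b) \<in> faces_at n w \<and> face_of_edge (w,b) \<in> faces_at n b"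
proof -
  obtain x y where wxy: "w = (x,y)" by (cases w)
  obtain u v where buv: "b = (u,v)" by (cases b)
  have a: "odd x" "even y" "1 \<le> x" "x \<le> 2 * int n - 1" "0 \<le> y" "y \<le> 2 * int n"
    using w wxy unfolding aztec_white_def by auto
  have c: "even u" "odd v" "0 \<le> u" "u \<le> 2 * int n" "1 \<le> v" "v \<le> 2 * int n - 1"
    using b buv unfolding aztec_black_def by auto
  have ad: "(u - x, v - y) \<in> {(1, 1), (-1, -1), (-1, 1), (1, -1)}"
    using e wxy buv unfolding aztec_edges_def adj_def by auto
  show ?thesis
    unfolding wxy buv faces_at_white[OF w[unfolded wxy]] faces_at_black[OF b[unfolded buv]] face_of_edge_def
    using a c ad by auto
qed

lemma reflect_reflect [simp]: "reflect v (reflect v F) = F"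
  unfolding reflect_def by simp

lemma reflect_neq:
  assumes "v \<in> aztec_vertices n" "F \<in> faces_at n v"
  shows "reflect v F \<noteq> F"
proof
  assume "reflect v F = F"
  then have "F = v" unfolding reflect_def by (auto simp: prod_eq_iff)
  then show False using assms unfolding faces_at_def aztec_faces_def aztec_white_def aztec_black_def by auto
qed

lemma reflect_faces_at:
  assumes v: "v \<in> aztec_vertices n" and i: "interior n v" and F: "F \<in> faces_at n v"
  shows "reflect v F \<in> faces_at n v"
proof -
  obtain x y where vxy: "v = (x,y)" by (cases v)
  show ?thesis
  proof (cases "v \<in> aztec_white n")
    case True
    have "odd x" using True vxy unfolding aztec_white_def by auto
    then show ?thesis using F i unfolding vxy faces_at_white[OF True[unfolded vxy]] reflect_def interior_def by auto
  next
    case False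
    then have bl: "(x,y) \<in> aztec_black n" using v vxy by auto
    have "even x" using bl unfolding aztec_black_def by auto
    then show ?thesis using F i unfolding vxy faces_at_black[OF bl] reflect_def interior_def by auto
  qed
qed

lemma faces_at_reflect_cases:
  assumes v: "v \<in> aztec_vertices n" and F: "F \<in> faces_at n v" and G: "G \<in> faces_at n v"
  shows "G = F \<or> G = reflect v F"
proof -
  obtain x y where vxy: "v = (x,y)" by (cases v)
  show ?thesis
  proof (cases "v \<in> aztec_white n")
    case True
    then show ?thesis using F G unfolding vxy faces_at_white[OF True[unfolded vxy]] reflect_def by auto
  next
    case False
    then have bl: "(x,y) \<in> aztec_black n" using v vxy by auto
    then show ?thesis using F G unfolding vxy faces_at_black[OF bl] reflect_def by auto
  qed
qed

lemma faces_at_boundary: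
  assumes v: "v \<in> aztec_vertices n" and i: "\<not> interior n v" and n: "n \<ge> 1"
  shows "faces_at n v = {boundary_face n v}"
proof -
  obtain x y where vxy: "v = (x,y)" by (cases v)
  show ?thesis
  proof (cases "v \<in> aztec_white n")
    case True
    have a: "odd x" "even y" "1 \<le> x" "x \<le> 2 * int n - 1" "0 \<le> y" "y \<le> 2 * int n"
      using True vxy unfolding aztec_white_def by auto
    have "y = 0 \<or> y = 2 * int n" using i a unfolding vxy interior_def by (auto; presburger)
    then show ?thesis using a n unfolding vxy faces_at_white[OF True[unfolded vxy]] boundary_face_def by auto
  next
    case False
    then have bl: "(x,y) \<in> aztec_black n" using v vxy by auto
    have a: "even x" "odd y" "0 \<le> x" "x \<le> 2 * int n" "1 \<le> y" "y \<le> 2 * int n - 1"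
      using bl unfolding aztec_black_def by auto
    have "x = 0 \<or> x = 2 * int n" using i a unfolding vxy interior_def by (auto; presburger)
    then show ?thesis using a n unfolding vxy faces_at_black[OF bl] boundary_face_def by auto
  qed
qed

lemma white_corners_of_face:
  assumes F: "F \<in> aztec_faces n"
  shows "{w \<in> aztec_white n. F \<in> faces_at n w} = {north F, south F}"
proof (intro equalityI subsetI)
  fix w assume w: "w \<in> {w \<in> aztec_white n. F \<in> faces_at n w}"
  obtain x y where wxy: "w = (x, y)" by (cases w)
  with w have "F = (x, y - 1) \<or> F = (x, y + 1)" using faces_at_white[of x y n] by auto
  then show "w \<in> {north F, south F}" unfolding wxy north_def south_def by auto
next
  fix w assume "w \<in> {north F, south F}"
  then show "w \<in> {w \<in> aztec_white n. F \<in> faces_at n w}"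
    using F unfolding north_def south_def faces_at_def aztec_faces_def aztec_white_def by auto
qed

lemma black_corners_of_face:
  assumes F: "F \<in> aztec_faces n"
  shows "{b \<in> aztec_black n. F \<in> faces_at n b} = {west F, east F}"
proof (intro equalityI subsetI)
  fix b assume b: "b \<in> {b \<in> aztec_black n. F \<in> faces_at n b}"
  obtain x y where bxy: "b = (x, y)" by (cases b)
  with b have "F = (x - 1, y) \<or> F = (x + 1, y)" using faces_at_black[of x y n] by auto
  then show "b \<in> {west F, east F}" unfolding bxy west_def east_def by auto
next
  fix b assume "b \<in> {west F, east F}"
  then show "b \<in> {b \<in> aztec_black n. F \<in> faces_at n b}"
    using F unfolding west_def east_def faces_at_def aztec_faces_def aztec_black_def by auto
qed

lemma face_square_edges: "{north F, south F} \<times> {west F, east F} \<subseteq> {e \<in> aztec_edges. face_of_edge e = F}"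
  unfolding aztec_edges_def adj_def face_of_edge_def north_def south_def west_def east_def by auto

lemma face_corners_distinct: "north F \<noteq> south F" "west F \<noteq> east F"
  unfolding north_def south_def west_def east_def by (auto simp: prod_eq_iff)

definition opposite_edge :: "vtx \<times> vtx \<Rightarrow> vtx \<times> vtx" where
  "opposite_edge e = ((fst (fst e), 2 * snd (snd e) - snd (fst e)), (2 * fst (fst e) - fst (snd e), snd (snd e)))"

lemma opposite_edge_face:
  "opposite_edge (north F, west F) = (south F, east F)" "opposite_edge (south F, east F) = (north F, west F)"
  "opposite_edge (north F, east F) = (south F, west F)" "opposite_edge (south F, west F) = (north F, east F)"
  unfolding opposite_edge_def north_def south_def west_def east_def by auto

text \<open>Urban renewal on every face keeps the interior vertices (those on two faces) and deletes the
  boundary ones, except that the removed vertices R come back.\<close>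
definition renewed :: "nat \<Rightarrow> vtx set \<Rightarrow> vtx set \<Rightarrow> vtx set" where
  "renewed n R V = {v \<in> V. interior n v \<or> v \<in> R}"

definition renewal_label :: "nat \<Rightarrow> vtx set \<Rightarrow> (vtx \<Rightarrow> vtx) \<Rightarrow> vtx \<Rightarrow> vtx" where
  "renewal_label n R \<alpha> =
     (\<lambda>v \<in> renewed n R (aztec_vertices n). if v \<in> R then boundary_face n v else reflect v (\<alpha> v))"

definition renewal_label_inv :: "nat \<Rightarrow> vtx set \<Rightarrow> (vtx \<Rightarrow> vtx) \<Rightarrow> vtx \<Rightarrow> vtx" where
  "renewal_label_inv n R \<beta> =
     (\<lambda>v \<in> aztec_vertices n - R. if interior n v then reflect v (\<beta> v) else boundary_face n v)"

context
  fixes n :: nat and R :: "vtx set"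
  assumes n: "n \<ge> 1" and R: "R \<subseteq> aztec_vertices n" and R_boundary: "\<forall>v\<in>R. \<not> interior n v"
begin

lemma renewal_label_PiE:
  assumes \<alpha>: "\<alpha> \<in> PiE (aztec_vertices n - R) (faces_at n)"
  shows "renewal_label n R \<alpha> \<in> PiE (renewed n R (aztec_vertices n)) (faces_at n)"
proof -
  have "renewal_label n R \<alpha> v \<in> faces_at n v" if v: "v \<in> renewed n R (aztec_vertices n)" for v
  proof (cases "v \<in> R")
    case True
    then have "faces_at n v = {boundary_face n v}" using R R_boundary n by (intro faces_at_boundary) auto
    then show ?thesis using v True unfolding renewal_label_def by simp
  next
    case False
    then have v': "v \<in> aztec_vertices n" "interior n v" "v \<in> aztec_vertices n - R"
      using v unfolding renewed_def by auto
    have "\<alpha> v \<in> faces_at n v" using \<alpha> v'(3) by (simp add: PiE_iff)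
    then have "reflect v (\<alpha> v) \<in> faces_at n v" using reflect_faces_at v' by blast
    then show ?thesis using v False unfolding renewal_label_def by simp
  qed
  then show ?thesis unfolding renewal_label_def by (simp add: PiE_iff)
qed

lemma renewal_label_inv_PiE:
  assumes \<beta>: "\<beta> \<in> PiE (renewed n R (aztec_vertices n)) (faces_at n)"
  shows "renewal_label_inv n R \<beta> \<in> PiE (aztec_vertices n - R) (faces_at n)"
proof -
  have "renewal_label_inv n R \<beta> v \<in> faces_at n v" if v: "v \<in> aztec_vertices n - R" for v
  proof (cases "interior n v")
    case False
    then have "faces_at n v = {boundary_face n v}" using v n by (intro faces_at_boundary) auto
    then show ?thesis using v False unfolding renewal_label_inv_def by simp
  next
    case True
    then have "v \<in> renewed n R (aztec_vertices n)" using v unfolding renewed_def by auto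
    then have "\<beta> v \<in> faces_at n v" using \<beta> by (simp add: PiE_iff)
    then have "reflect v (\<beta> v) \<in> faces_at n v" using reflect_faces_at v True by blast
    then show ?thesis using v True unfolding renewal_label_inv_def by simp
  qed
  then show ?thesis unfolding renewal_label_inv_def by (simp add: PiE_iff)
qed

lemma renewal_label_inv_renewal_label:
  assumes \<alpha>: "\<alpha> \<in> PiE (aztec_vertices n - R) (faces_at n)"
  shows "renewal_label_inv n R (renewal_label n R \<alpha>) = \<alpha>"
proof
  fix v
  show "renewal_label_inv n R (renewal_label n R \<alpha>) v = \<alpha> v"
  proof (cases "v \<in> aztec_vertices n - R")
    case False
    then show ?thesis using PiE_arb[OF \<alpha> False] unfolding renewal_label_inv_def by auto
  next
    case vG: True
    show ?thesis
    proof (cases "interior n v")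
      case True
      then have "v \<in> renewed n R (aztec_vertices n)" using vG unfolding renewed_def by auto
      then show ?thesis using True vG unfolding renewal_label_inv_def renewal_label_def by simp
    next
      case False
      then have "faces_at n v = {boundary_face n v}" using vG n by (intro faces_at_boundary) auto
      moreover have "\<alpha> v \<in> faces_at n v" using \<alpha> vG by (simp add: PiE_iff)
      ultimately show ?thesis using False vG unfolding renewal_label_inv_def by simp
    qed
  qed
qed

lemma renewal_label_renewal_label_inv:
  assumes \<beta>: "\<beta> \<in> PiE (renewed n R (aztec_vertices n)) (faces_at n)"
  shows "renewal_label n R (renewal_label_inv n R \<beta>) = \<beta>"
proof
  fix v
  show "renewal_label n R (renewal_label_inv n R \<beta>) v = \<beta> v"
  proof (cases "v \<in> renewed n R (aztec_vertices n)")
    case False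
    then show ?thesis using PiE_arb[OF \<beta> False] unfolding renewal_label_def by auto
  next
    case vH: True
    show ?thesis
    proof (cases "v \<in> R")
      case True
      then have "faces_at n v = {boundary_face n v}" using R R_boundary n by (intro faces_at_boundary) auto
      moreover have "\<beta> v \<in> faces_at n v" using \<beta> vH by (simp add: PiE_iff)
      ultimately show ?thesis using True vH unfolding renewal_label_def by simp
    next
      case False
      then have "interior n v" "v \<in> aztec_vertices n - R" using vH unfolding renewed_def by auto
      then show ?thesis using False vH unfolding renewal_label_inv_def renewal_label_def by simp
    qed
  qed
qed

lemma bij_betw_renewal_label:
  "bij_betw (renewal_label n R) (PiE (aztec_vertices n - R) (faces_at n))
     (PiE (renewed n R (aztec_vertices n)) (faces_at n))"
  by (rule bij_betw_byWitness[where f' = "renewal_label_inv n R"])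
    (use renewal_label_PiE renewal_label_inv_PiE renewal_label_inv_renewal_label
      renewal_label_renewal_label_inv in blast)+

lemma renewal_label_eq_iff:
  assumes \<alpha>: "\<alpha> \<in> PiE (aztec_vertices n - R) (faces_at n)" and v: "v \<in> aztec_vertices n"
  shows "(v \<in> renewed n R (aztec_vertices n) \<and> renewal_label n R \<alpha> v = F)
     \<longleftrightarrow> (F \<in> faces_at n v \<and> \<not> (v \<in> aztec_vertices n - R \<and> \<alpha> v = F))"
proof (cases "v \<in> R")
  case True
  then have "faces_at n v = {boundary_face n v}" using R_boundary v n by (intro faces_at_boundary) auto
  then show ?thesis using True v unfolding renewal_label_def renewed_def by auto
next
  case False
  then have \<alpha>v: "\<alpha> v \<in> faces_at n v" using \<alpha> v by (simp add: PiE_iff)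
  show ?thesis
  proof (cases "interior n v")
    case True
    have "reflect v (\<alpha> v) \<in> faces_at n v" "reflect v (\<alpha> v) \<noteq> \<alpha> v"
      using reflect_faces_at[OF v True \<alpha>v] reflect_neq[OF v \<alpha>v] by blast+
    moreover have "F \<in> faces_at n v \<Longrightarrow> F = \<alpha> v \<or> F = reflect v (\<alpha> v)"
      using faces_at_reflect_cases[OF v \<alpha>v] by blast
    ultimately show ?thesis using v False True unfolding renewal_label_def renewed_def by auto
  next
    case False
    then have "faces_at n v = {boundary_face n v}" using v n by (intro faces_at_boundary) auto
    then show ?thesis using \<alpha>v v False \<open>v \<notin> R\<close> unfolding renewed_def by auto
  qed
qed

lemma renewal_label_white_class:
  assumes \<alpha>: "\<alpha> \<in> PiE (aztec_vertices n - R) (faces_at n)" and F: "F \<in> aztec_faces n"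
  shows "{w \<in> renewed n R (aztec_white n). renewal_label n R \<alpha> w = F}
     = {north F, south F} - {w \<in> aztec_white n - R. \<alpha> w = F}"
proof -
  have "w \<in> renewed n R (aztec_white n) \<and> renewal_label n R \<alpha> w = F
      \<longleftrightarrow> w \<in> {w \<in> aztec_white n. F \<in> faces_at n w} \<and> \<not> (w \<in> aztec_white n - R \<and> \<alpha> w = F)" for w
    using renewal_label_eq_iff[OF \<alpha>, of w F] aztec_white_black_disjoint
    unfolding renewed_def by blast
  then show ?thesis using white_corners_of_face[OF F] by blast
qed

lemma renewal_label_black_class:
  assumes \<alpha>: "\<alpha> \<in> PiE (aztec_vertices n - R) (faces_at n)" and F: "F \<in> aztec_faces n"
  shows "{b \<in> renewed n R (aztec_black n). renewal_label n R \<alpha> b = F}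
     = {west F, east F} - {b \<in> aztec_black n - R. \<alpha> b = F}"
proof -
  have "b \<in> renewed n R (aztec_black n) \<and> renewal_label n R \<alpha> b = F
      \<longleftrightarrow> b \<in> {b \<in> aztec_black n. F \<in> faces_at n b} \<and> \<not> (b \<in> aztec_black n - R \<and> \<alpha> b = F)" for b
    using renewal_label_eq_iff[OF \<alpha>, of b F] aztec_white_black_disjoint
    unfolding renewed_def by blast
  then show ?thesis using black_corners_of_face[OF F] by blast
qed


lemma dimer_Z_face_renewal:
  fixes \<omega> :: "vtx \<times> vtx \<Rightarrow> real"
  assumes D: "D \<noteq> 0" and F: "F \<in> aztec_faces n"
    and face_D: "D = \<omega> (north F, west F) * \<omega> (south F, east F) + \<omega> (north F, east F) * \<omega> (south F, west F)"
    and \<alpha>: "\<alpha> \<in> PiE (aztec_vertices n - R) (faces_at n)"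
  shows "dimer_Z {w\<in>aztec_white n - R. \<alpha> w = F} {b\<in>aztec_black n - R. \<alpha> b = F}
      {e \<in> aztec_edges. face_of_edge e = F} \<omega>
    = D * dimer_Z {w\<in>renewed n R (aztec_white n). renewal_label n R \<alpha> w = F}
        {b\<in>renewed n R (aztec_black n). renewal_label n R \<alpha> b = F}
        {e \<in> aztec_edges. face_of_edge e = F} (\<lambda>e. \<omega> (opposite_edge e) / D)"
proof -
  have "{w\<in>aztec_white n - R. \<alpha> w = F} \<subseteq> {north F, south F}"
    "{b\<in>aztec_black n - R. \<alpha> b = F} \<subseteq> {west F, east F}"
    using \<alpha> white_corners_of_face[OF F] black_corners_of_face[OF F] by (auto simp: PiE_iff)
  from dimer_Z_urban_renewal[OF face_corners_distinct face_square_edges this face_D D]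
  show ?thesis
    by (simp add: opposite_edge_face renewal_label_white_class[OF \<alpha> F] renewal_label_black_class[OF \<alpha> F])
qed

theorem dimer_Z_aztec_urban_renewal:
  fixes \<omega> :: "vtx \<times> vtx \<Rightarrow> real"
  assumes D: "D \<noteq> 0"
    and face_D: "\<And>F. F \<in> aztec_faces n \<Longrightarrow>
      D = \<omega> (north F, west F) * \<omega> (south F, east F) + \<omega> (north F, east F) * \<omega> (south F, west F)"
  shows "dimer_Z (aztec_white n - R) (aztec_black n - R) aztec_edges \<omega>
    = D ^ card (aztec_faces n) * dimer_Z (renewed n R (aztec_white n)) (renewed n R (aztec_black n))
        aztec_edges (\<lambda>e. \<omega> (opposite_edge e) / D)"
proof -
  let ?E = "\<lambda>F. {e \<in> aztec_edges. face_of_edge e = F}"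
  let ?WH = "renewed n R (aztec_white n)" and ?BH = "renewed n R (aztec_black n)"
  let ?ZH = "\<lambda>\<beta>. \<Prod>F\<in>aztec_faces n. dimer_Z {w\<in>?WH. \<beta> w = F} {b\<in>?BH. \<beta> b = F} (?E F) (\<lambda>e. \<omega> (opposite_edge e) / D)"
  have labels: "face_of_edge (w, b) \<in> faces_at n w \<inter> faces_at n b"
    if "w \<in> aztec_white n" "b \<in> aztec_black n" "(w, b) \<in> aztec_edges" for w b
    using face_of_edge_faces_at[OF that] by blast
  have "dimer_Z (aztec_white n - R) (aztec_black n - R) aztec_edges \<omega>
      = (\<Sum>\<alpha>\<in>PiE ((aztec_white n - R) \<union> (aztec_black n - R)) (faces_at n).
          \<Prod>F\<in>aztec_faces n. dimer_Z {w\<in>aztec_white n - R. \<alpha> w = F} {b\<in>aztec_black n - R. \<alpha> b = F} (?E F) \<omega>)"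
    using finite_aztec_white finite_aztec_black finite_aztec_faces aztec_white_black_disjoint[of n]
      faces_at_subset labels
    by (intro dimer_Z_sum_labellings) auto
  also have "(aztec_white n - R) \<union> (aztec_black n - R) = aztec_vertices n - R" by blast
  also have "(\<Sum>\<alpha>\<in>PiE (aztec_vertices n - R) (faces_at n).
      \<Prod>F\<in>aztec_faces n. dimer_Z {w\<in>aztec_white n - R. \<alpha> w = F} {b\<in>aztec_black n - R. \<alpha> b = F} (?E F) \<omega>)
      = D ^ card (aztec_faces n) * (\<Sum>\<alpha>\<in>PiE (aztec_vertices n - R) (faces_at n). ?ZH (renewal_label n R \<alpha>))"
    unfolding sum_distrib_left
  proof (intro sum.cong refl)
    fix \<alpha> assume "\<alpha> \<in> PiE (aztec_vertices n - R) (faces_at n)"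
    from dimer_Z_face_renewal[OF D _ face_D this] show "(\<Prod>F\<in>aztec_faces n.
        dimer_Z {w\<in>aztec_white n - R. \<alpha> w = F} {b\<in>aztec_black n - R. \<alpha> b = F} (?E F) \<omega>)
      = D ^ card (aztec_faces n) * ?ZH (renewal_label n R \<alpha>)"
      by (simp add: prod.distrib)
  qed
  also have "(\<Sum>\<alpha>\<in>PiE (aztec_vertices n - R) (faces_at n). ?ZH (renewal_label n R \<alpha>))
      = (\<Sum>\<beta>\<in>PiE (renewed n R (aztec_vertices n)) (faces_at n). ?ZH \<beta>)"
    by (rule sum.reindex_bij_betw[OF bij_betw_renewal_label])
  also have "renewed n R (aztec_vertices n) = ?WH \<union> ?BH" unfolding renewed_def by blast
  also have "(\<Sum>\<beta>\<in>PiE (?WH \<union> ?BH) (faces_at n). ?ZH \<beta>) = dimer_Z ?WH ?BH aztec_edges (\<lambda>e. \<omega> (opposite_edge e) / D)"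
    using finite_aztec_white finite_aztec_black finite_aztec_faces aztec_white_black_disjoint[of n]
      faces_at_subset labels
    by (intro dimer_Z_sum_labellings[symmetric]) (auto simp: renewed_def)
  finally show ?thesis .
qed

end

section \<open>The q^diag weighting\<close>

lemma qdiag_weight_SW: "qdiag_weight n bb a q ((x, y), (x - 1, y - 1)) = bb"
  unfolding qdiag_weight_def Let_def by simp

lemma qdiag_weight_NE: "qdiag_weight n bb a q ((x, y), (x + 1, y + 1)) = bb"
  unfolding qdiag_weight_def Let_def by simp

lemma qdiag_weight_SE: "qdiag_weight n bb a q ((x, y), (x + 1, y - 1)) =
    a * q powi (- 2 * min ((2 * int n - 1 - x) div 2) ((2 * int n - 1 - (y - 1)) div 2))"
  unfolding qdiag_weight_def Let_def by simp

lemma qdiag_weight_NW: "qdiag_weight n bb a q ((x, y), (x - 1, y + 1)) =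
    a * q powi (2 * min ((2 * int n - 1 - x) div 2) ((2 * int n - 1 - (y + 1)) div 2) + 1)"
  unfolding qdiag_weight_def Let_def by simp

lemma qdiag_face_weight:
  assumes "q \<noteq> 0"
  shows "qdiag_weight n 1 a q (north F, west F) * qdiag_weight n 1 a q (south F, east F)
       + qdiag_weight n 1 a q (north F, east F) * qdiag_weight n 1 a q (south F, west F) = 1 + a\<^sup>2 * q"
proof -
  define m where "m = min ((2 * int n - 1 - fst F) div 2) ((2 * int n - 1 - snd F) div 2)"
  have "qdiag_weight n 1 a q (north F, west F) = 1" "qdiag_weight n 1 a q (south F, east F) = 1"
    "qdiag_weight n 1 a q (north F, east F) = a * q powi (- 2 * m)"
    "qdiag_weight n 1 a q (south F, west F) = a * q powi (2 * m + 1)"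
    unfolding qdiag_weight_def Let_def north_def south_def west_def east_def m_def by auto
  moreover have "q powi (- 2 * m) * q powi (2 * m + 1) = q"
    using assms by (simp add: power_int_add[symmetric])
  ultimately show ?thesis by (simp add: power2_eq_square algebra_simps)
qed

definition shift :: "vtx \<Rightarrow> vtx" where "shift v = (fst v - 1, snd v - 1)"

lemma bij_shift: "bij shift"
  by (rule o_bij[where g = "\<lambda>v. (fst v + 1, snd v + 1)"]) (auto simp: shift_def)

lemma shift_swap_aztec_edges: "map_prod shift shift ` prod.swap ` aztec_edges = aztec_edges"
proof (intro equalityI subsetI)
  fix e assume "e \<in> map_prod shift shift ` prod.swap ` aztec_edges"
  then show "e \<in> aztec_edges" by (auto simp: aztec_edges_def adj_def shift_def)
next
  fix e assume e: "e \<in> aztec_edges"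
  obtain w b where wb: "e = (w, b)" by (cases e)
  let ?e' = "((fst b + 1, snd b + 1), (fst w + 1, snd w + 1))"
  have "?e' \<in> aztec_edges" using e wb by (auto simp: aztec_edges_def adj_def)
  moreover have "e = map_prod shift shift (prod.swap ?e')" using wb by (simp add: shift_def)
  ultimately show "e \<in> map_prod shift shift ` prod.swap ` aztec_edges" by blast
qed

lemma renewal_factor_pos:
  fixes a q :: real
  assumes "q > 0" shows "1 + a\<^sup>2 * q > 0"
proof -
  have "0 \<le> a\<^sup>2 * q" using assms by (simp add: less_imp_le)
  then show ?thesis by linarith
qed

definition white_gauge :: "real \<Rightarrow> real \<Rightarrow> vtx \<Rightarrow> real" where
  "white_gauge a q w = q powi ((snd w - fst w + 1) div 2) / (1 + a\<^sup>2 * q)"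

definition black_gauge :: "real \<Rightarrow> vtx \<Rightarrow> real" where
  "black_gauge q b = q powi ((fst b - snd b - 1) div 2)"

abbreviation renewed_weight :: "nat \<Rightarrow> real \<Rightarrow> real \<Rightarrow> vtx \<times> vtx \<Rightarrow> real" where
  "renewed_weight n a q \<equiv> \<lambda>e. qdiag_weight n 1 a q (opposite_edge e) / (1 + a\<^sup>2 * q)"

lemma qdiag_weight_opposite_diagonal_edge:
  assumes parity: "odd x" "even y" and b: "b = (x + 1, y + 1) \<or> b = (x - 1, y - 1)"
  shows "qdiag_weight n 1 a q (opposite_edge ((x, y), b))
    = q powi ((y - x + 1) div 2 + (fst b - snd b - 1) div 2) * qdiag_weight (n - 1) 1 (a * q) q (shift b, shift (x, y))"
  using b
proof
  assume b: "b = (x + 1, y + 1)"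
  have "opposite_edge ((x, y), b) = ((x, y + 2), (x - 1, y + 2 - 1))" "(shift b, shift (x, y)) = ((x, y), (x - 1, y - 1))"
    unfolding opposite_edge_def shift_def b by simp_all
  moreover have "(y - x + 1) div 2 + (fst b - snd b - 1) div 2 = 0"
    using parity unfolding b by (simp; presburger)
  ultimately show ?thesis by (simp only: qdiag_weight_SW) simp
next
  assume b: "b = (x - 1, y - 1)"
  have "opposite_edge ((x, y), b) = ((x, y - 2), (x + 1, y - 2 + 1))"
    "(shift b, shift (x, y)) = ((x - 2, y - 2), (x - 2 + 1, y - 2 + 1))"
    unfolding opposite_edge_def shift_def b by simp_all
  moreover have "(y - x + 1) div 2 + (fst b - snd b - 1) div 2 = 0"
    using parity unfolding b by (simp; presburger)
  ultimately show ?thesis by (simp only: qdiag_weight_NE) simp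
qed

lemma qdiag_weight_opposite_antidiagonal_edge:
  assumes n: "n \<ge> 1" and q: "q \<noteq> 0" and parity: "odd x" "even y"
    and b: "b = (x - 1, y + 1) \<or> b = (x + 1, y - 1)"
  shows "qdiag_weight n 1 a q (opposite_edge ((x, y), b))
    = q powi ((y - x + 1) div 2 + (fst b - snd b - 1) div 2) * qdiag_weight (n - 1) 1 (a * q) q (shift b, shift (x, y))"
  using b
proof
  assume b: "b = (x - 1, y + 1)"
  have "opposite_edge ((x, y), b) = ((x, y + 2), (x + 1, y + 2 - 1))"
    "(shift b, shift (x, y)) = ((x - 2, y), (x - 2 + 1, y - 1))"
    unfolding opposite_edge_def shift_def b by simp_all
  moreover have "(y - x + 1) div 2 + (fst b - snd b - 1) div 2 = - 1"
    using parity unfolding b by (simp; presburger)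
  moreover have "2 * int (n - 1) - 1 - (x - 2) = 2 * int n - 1 - x"
    "2 * int (n - 1) - 1 - (y - 1) = 2 * int n - 1 - (y + 2 - 1)"
    using n by (simp_all add: of_nat_diff)
  ultimately show ?thesis using q by (simp only: qdiag_weight_SE) (simp add: power_int_minus)
next
  assume b: "b = (x + 1, y - 1)"
  define m where "m = min ((2 * int n - 1 - x) div 2) ((2 * int n - 1 - (y - 2 + 1)) div 2)"
  have "opposite_edge ((x, y), b) = ((x, y - 2), (x - 1, y - 2 + 1))"
    "(shift b, shift (x, y)) = ((x, y - 2), (x - 1, y - 2 + 1))"
    unfolding opposite_edge_def shift_def b by simp_all
  moreover have "(y - x + 1) div 2 + (fst b - snd b - 1) div 2 = 1"
    using parity unfolding b by (simp; presburger)
  moreover have "min ((2 * int (n - 1) - 1 - x) div 2) ((2 * int (n - 1) - 1 - (y - 2 + 1)) div 2) = m - 1"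
  proof -
    have "\<And>z::int. (z - 2) div 2 = z div 2 - 1" by presburger
    then show ?thesis unfolding m_def using n by (simp add: of_nat_diff min_diff algebra_simps)
  qed
  ultimately show ?thesis
    using q by (simp only: qdiag_weight_NW m_def[symmetric]) (simp add: power_int_add power_int_diff field_simps)
qed

text \<open>After urban renewal an edge carries the weight of the opposite edge of its face.  Shifted
  by (-1,-1) with colours exchanged, this is the weight for size n - 1 and aq in place of a, up to
  powers of q that depend only on the diagonals through the two endpoints.\<close>
lemma qdiag_weight_opposite_edge:
  assumes n: "n \<ge> 1" and q: "q \<noteq> 0" and w: "odd (fst w)" "even (snd w)" and e: "(w, b) \<in> aztec_edges"
  shows "qdiag_weight n 1 a q (opposite_edge (w, b))
    = q powi ((snd w - fst w + 1) div 2 + (fst b - snd b - 1) div 2)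
      * qdiag_weight (n - 1) 1 (a * q) q (shift b, shift w)"
proof -
  obtain x y where wxy: "w = (x, y)" by (cases w)
  have "(b = (x + 1, y + 1) \<or> b = (x - 1, y - 1)) \<or> (b = (x - 1, y + 1) \<or> b = (x + 1, y - 1))"
    using e wxy unfolding aztec_edges_def adj_def by (cases b) auto
  then show ?thesis
    using qdiag_weight_opposite_diagonal_edge qdiag_weight_opposite_antidiagonal_edge[OF n q] w
    unfolding wxy by auto
qed

lemma renewed_weight_eq:
  assumes n: "n \<ge> 1" and q: "q > 0" and w: "w \<in> aztec_white n" and e: "(w, b) \<in> aztec_edges"
  shows "renewed_weight n a q (w, b)
    = white_gauge a q w * black_gauge q b * qdiag_weight (n - 1) 1 (a * q) q (shift b, shift w)"
proof -
  have "odd (fst w)" "even (snd w)" using w unfolding aztec_white_def by auto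
  from qdiag_weight_opposite_edge[OF n _ this e] q show ?thesis
    by (simp add: white_gauge_def black_gauge_def power_int_add)
qed

lemma dimer_Z_renewed_weight:
  assumes n: "n \<ge> 1" and q: "q > 0" and WS: "WS \<subseteq> aztec_white n" and BS: "BS \<subseteq> aztec_black n"
  shows "dimer_Z WS BS aztec_edges (renewed_weight n a q)
    = (\<Prod>w\<in>WS. white_gauge a q w) * (\<Prod>b\<in>BS. black_gauge q b)
      * dimer_Z (shift ` BS) (shift ` WS) aztec_edges (qdiag_weight (n - 1) 1 (a * q) q)"
proof -
  let ?\<omega> = "qdiag_weight (n - 1) 1 (a * q) q"
  have "dimer_Z WS BS aztec_edges (renewed_weight n a q) = (\<Prod>w\<in>WS. white_gauge a q w) * (\<Prod>b\<in>BS. black_gauge q b)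
      * dimer_Z WS BS aztec_edges (?\<omega> \<circ> map_prod shift shift \<circ> prod.swap)"
    using renewed_weight_eq[OF n q] WS by (intro dimer_Z_gauge) auto
  also have "dimer_Z WS BS aztec_edges (?\<omega> \<circ> map_prod shift shift \<circ> prod.swap)
      = dimer_Z BS WS (prod.swap ` aztec_edges) (?\<omega> \<circ> map_prod shift shift)"
    by (subst dimer_Z_transpose[of BS]) (simp add: image_image o_assoc)
  also have "\<dots> = dimer_Z (shift ` BS) (shift ` WS) aztec_edges ?\<omega>"
    using dimer_Z_bij_relabel[OF bij_shift, of BS WS "prod.swap ` aztec_edges" ?\<omega>]
    by (simp add: shift_swap_aztec_edges)
  finally show ?thesis .
qed

lemma shift_image: "shift ` S = {v. (fst v + 1, snd v + 1) \<in> S}"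
  by (auto simp: shift_def image_iff) (metis fst_conv snd_conv add_diff_cancel)

lemma shift_renewed_black: "n \<ge> 1 \<Longrightarrow> shift ` renewed n {} (aztec_black n) = aztec_white (n - 1)"
  unfolding shift_image renewed_def aztec_black_def aztec_white_def interior_def by auto

lemma shift_renewed_white: "n \<ge> 1 \<Longrightarrow> shift ` renewed n {} (aztec_white n) = aztec_black (n - 1)"
  unfolding shift_image renewed_def aztec_black_def aztec_white_def interior_def by auto

lemma Zdiag_eq_dimer_Z: "Zdiag n bb a q = dimer_Z (aztec_white n) (aztec_black n) aztec_edges (qdiag_weight n bb a q)"
  unfolding Zdiag_def dimer_Z_def perfect_matchings_eq_pmatchings aztec_edges_def ..

definition interior_gauge :: "nat \<Rightarrow> real \<Rightarrow> real \<Rightarrow> real" where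
  "interior_gauge n a q = (\<Prod>w\<in>renewed n {} (aztec_white n). white_gauge a q w)
     * (\<Prod>b\<in>renewed n {} (aztec_black n). black_gauge q b)"

lemma dimer_Z_renewed_interior:
  assumes "n \<ge> 1" "q > 0"
  shows "dimer_Z (renewed n {} (aztec_white n)) (renewed n {} (aztec_black n)) aztec_edges (renewed_weight n a q)
    = interior_gauge n a q * Zdiag (n - 1) 1 (a * q) q"
  using dimer_Z_renewed_weight[OF assms, of "renewed n {} (aztec_white n)" "renewed n {} (aztec_black n)" a]
  unfolding interior_gauge_def Zdiag_eq_dimer_Z shift_renewed_black[OF assms(1)] shift_renewed_white[OF assms(1)]
  by (simp add: renewed_def)

lemma Zdiag_recursion:
  assumes n: "n \<ge> 1" and q: "q > 0"
  shows "Zdiag n 1 a q = (1 + a\<^sup>2 * q) ^ card (aztec_faces n) * interior_gauge n a q * Zdiag (n - 1) 1 (a * q) q"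
proof -
  have "dimer_Z (aztec_white n - {}) (aztec_black n - {}) aztec_edges (qdiag_weight n 1 a q)
      = (1 + a\<^sup>2 * q) ^ card (aztec_faces n)
        * dimer_Z (renewed n {} (aztec_white n)) (renewed n {} (aztec_black n)) aztec_edges (renewed_weight n a q)"
    using n renewal_factor_pos[OF q, of a] qdiag_face_weight q by (intro dimer_Z_aztec_urban_renewal) auto
  then show ?thesis
    by (simp add: Zdiag_eq_dimer_Z dimer_Z_renewed_interior[OF n q] mult.assoc)
qed

lemma interior_gauge_pos: "q > 0 \<Longrightarrow> interior_gauge n a q > 0"
  unfolding interior_gauge_def white_gauge_def black_gauge_def
  using renewal_factor_pos[of q a] by (simp add: prod_pos)

lemma Zdiag_pos: "a > 0 \<Longrightarrow> q > 0 \<Longrightarrow> Zdiag n 1 a q > 0"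
proof (induction n arbitrary: a)
  case 0
  have "aztec_white 0 = {}" "aztec_black 0 = {}" unfolding aztec_white_def aztec_black_def by auto
  then show ?case by (simp add: Zdiag_eq_dimer_Z dimer_Z_empty)
next
  case (Suc n)
  then show ?case
    using Zdiag_recursion[of "Suc n" q a] interior_gauge_pos[of q "Suc n" a] renewal_factor_pos[of q a]
    by simp
qed

text \<open>Once u and r are matched into the interior, the rest of the renewed graph is gauge
  equivalent to the diamond of size n - 1 with the shifted partners of u and r removed.\<close>
lemma renewed_weight_pair:
  assumes n: "n \<ge> 1" and q: "q > 0" and u: "u \<in> aztec_white n"
    and w: "w \<in> renewed n {} (aztec_white n)" and b: "b \<in> renewed n {} (aztec_black n)"
    and e: "(u, b) \<in> aztec_edges" "(w, r) \<in> aztec_edges"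
  shows "renewed_weight n a q (u, b) * renewed_weight n a q (w, r)
      * dimer_Z (renewed n {} (aztec_white n) - {w}) (renewed n {} (aztec_black n) - {b}) aztec_edges (renewed_weight n a q)
    = white_gauge a q u * black_gauge q r * interior_gauge n a q
      * qdiag_weight (n - 1) 1 (a * q) q (shift b, shift u) * qdiag_weight (n - 1) 1 (a * q) q (shift r, shift w)
      * dimer_Z (aztec_white (n - 1) - {shift b}) (aztec_black (n - 1) - {shift w}) aztec_edges
          (qdiag_weight (n - 1) 1 (a * q) q)"
proof -
  let ?WH = "renewed n {} (aztec_white n)" and ?BH = "renewed n {} (aztec_black n)"
  let ?\<omega> = "qdiag_weight (n - 1) 1 (a * q) q"
  have fin: "finite ?WH" "finite ?BH"
    using finite_aztec_white finite_aztec_black by (simp_all add: renewed_def)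
  have "shift ` (?BH - {b}) = aztec_white (n - 1) - {shift b}" "shift ` (?WH - {w}) = aztec_black (n - 1) - {shift w}"
    using shift_renewed_black[OF n] shift_renewed_white[OF n]
    by (simp_all add: image_set_diff[OF bij_is_inj[OF bij_shift]])
  then have rest: "dimer_Z (?WH - {w}) (?BH - {b}) aztec_edges (renewed_weight n a q)
      = (\<Prod>v\<in>?WH - {w}. white_gauge a q v) * (\<Prod>v\<in>?BH - {b}. black_gauge q v)
        * dimer_Z (aztec_white (n - 1) - {shift b}) (aztec_black (n - 1) - {shift w}) aztec_edges ?\<omega>"
    using dimer_Z_renewed_weight[OF n q, of "?WH - {w}" "?BH - {b}" a] by (auto simp: renewed_def)
  have gauge: "interior_gauge n a q = white_gauge a q w * black_gauge q b
      * ((\<Prod>v\<in>?WH - {w}. white_gauge a q v) * (\<Prod>v\<in>?BH - {b}. black_gauge q v))"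
    unfolding interior_gauge_def prod.remove[OF fin(1) w] prod.remove[OF fin(2) b] by (simp add: ac_simps)
  have w': "w \<in> aztec_white n" using w by (simp add: renewed_def)
  show ?thesis
    unfolding rest gauge renewed_weight_eq[OF n q u e(1)] renewed_weight_eq[OF n q w' e(2)]
    by (simp add: ac_simps)
qed

section \<open>Two removed boundary vertices\<close>

definition removed_white :: "nat \<Rightarrow> int \<Rightarrow> vtx" where
  "removed_white n i = (2 * int n - 2 * i - 1, 2 * int n)"

definition removed_black :: "nat \<Rightarrow> int \<Rightarrow> vtx" where
  "removed_black n j = (2 * int n, 2 * int n - 2 * j - 1)"

lemma Zdiag_rem_eq_dimer_Z:
  assumes "0 \<le> i" "i \<le> int n - 1" "0 \<le> j" "j \<le> int n - 1"
  shows "Zdiag_rem i j a q n = dimer_Z (aztec_white n - {removed_white n i}) (aztec_black n - {removed_black n j})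
    aztec_edges (qdiag_weight n 1 a q)"
  using assms unfolding Zdiag_rem_def dimer_Z_def perfect_matchings_eq_pmatchings aztec_edges_def
    removed_white_def removed_black_def by simp

definition lower_neighbour :: "nat \<Rightarrow> int \<Rightarrow> nat \<Rightarrow> vtx" where
  "lower_neighbour n i k = (2 * int n - 2 * i - 2 + 2 * int k, 2 * int n - 1)"

definition left_neighbour :: "nat \<Rightarrow> int \<Rightarrow> nat \<Rightarrow> vtx" where
  "left_neighbour n j l = (2 * int n - 1, 2 * int n - 2 * j - 2 + 2 * int l)"

lemma shift_lower_neighbour: "n \<ge> 1 \<Longrightarrow> shift (lower_neighbour n i k) = removed_white (n - 1) (i - int k)"
  unfolding shift_def lower_neighbour_def removed_white_def by simp

lemma shift_left_neighbour: "n \<ge> 1 \<Longrightarrow> shift (left_neighbour n j l) = removed_black (n - 1) (j - int l)"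
  unfolding shift_def left_neighbour_def removed_black_def by simp

lemma sum_shifted_index_pairs:
  fixes f :: "nat \<Rightarrow> nat \<Rightarrow> real" and i j :: int
  assumes "0 \<le> i" "0 \<le> j" and "i = 0 \<and> j = 0 \<Longrightarrow> f 1 1 = 0"
  shows "(\<Sum>(k, l)\<in>{(k::nat, l::nat). k \<le> 1 \<and> l \<le> 1 \<and> (i - int k, j - int l) \<noteq> (-1, -1)}. f k l)
    = (\<Sum>k\<le>1. \<Sum>l\<le>1. f k l)"
proof -
  let ?S = "{(k::nat, l::nat). k \<le> 1 \<and> l \<le> 1 \<and> (i - int k, j - int l) \<noteq> (-1, -1)}"
  have "?S \<subseteq> {..1} \<times> {..1}" by auto
  moreover have "f k l = 0" if "(k, l) \<in> {..1} \<times> {..1} - ?S" for k l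
  proof -
    have "k = 1" "l = 1" "i = 0" "j = 0" using that assms(1,2) by auto
    then show ?thesis using assms(3) by simp
  qed
  ultimately have "(\<Sum>(k, l)\<in>?S. f k l) = (\<Sum>(k, l)\<in>{..1} \<times> {..1}. f k l)"
    by (intro sum.mono_neutral_left) auto
  then show ?thesis by (simp only: sum.cartesian_product)
qed

context
  fixes n :: nat and i j :: int
  assumes n: "n \<ge> 1" and i: "0 \<le> i" "i \<le> int n - 1" and j: "0 \<le> j" "j \<le> int n - 1"
begin

lemma removed_white_boundary: "removed_white n i \<in> aztec_white n" "\<not> interior n (removed_white n i)"
  using i unfolding removed_white_def aztec_white_def interior_def by auto

lemma removed_black_boundary: "removed_black n j \<in> aztec_black n" "\<not> interior n (removed_black n j)"
  using j unfolding removed_black_def aztec_black_def interior_def by auto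

lemma renewed_removed:
  "renewed n {removed_white n i, removed_black n j} (aztec_white n)
    = insert (removed_white n i) (renewed n {} (aztec_white n))"
  "renewed n {removed_white n i, removed_black n j} (aztec_black n)
    = insert (removed_black n j) (renewed n {} (aztec_black n))"
  "removed_white n i \<notin> renewed n {} (aztec_white n)" "removed_black n j \<notin> renewed n {} (aztec_black n)"
  using removed_white_boundary removed_black_boundary aztec_white_black_disjoint[of n]
  unfolding renewed_def by auto

lemma Zdiag_rem_renewal:
  assumes q: "q > 0"
  shows "Zdiag_rem i j a q n = (1 + a\<^sup>2 * q) ^ card (aztec_faces n)
    * dimer_Z (insert (removed_white n i) (renewed n {} (aztec_white n)))
        (insert (removed_black n j) (renewed n {} (aztec_black n))) aztec_edges (renewed_weight n a q)"
proof -
  let ?R = "{removed_white n i, removed_black n j}"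
  have "aztec_white n - {removed_white n i} = aztec_white n - ?R" "aztec_black n - {removed_black n j} = aztec_black n - ?R"
    using removed_white_boundary removed_black_boundary aztec_white_black_disjoint[of n] by auto
  moreover have "dimer_Z (aztec_white n - ?R) (aztec_black n - ?R) aztec_edges (qdiag_weight n 1 a q)
      = (1 + a\<^sup>2 * q) ^ card (aztec_faces n)
        * dimer_Z (renewed n ?R (aztec_white n)) (renewed n ?R (aztec_black n)) aztec_edges (renewed_weight n a q)"
    using n removed_white_boundary removed_black_boundary renewal_factor_pos[OF q, of a] qdiag_face_weight q
    by (intro dimer_Z_aztec_urban_renewal) auto
  ultimately show ?thesis
    using Zdiag_rem_eq_dimer_Z[OF i j] by (simp add: renewed_removed)
qed

lemma lower_neighbour_mem:
  "k \<le> 1 \<Longrightarrow> lower_neighbour n i k \<in> renewed n {} (aztec_black n) \<longleftrightarrow> 0 \<le> i - int k \<and> i - int k \<le> int (n - 1) - 1"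
  using i n unfolding lower_neighbour_def renewed_def aztec_black_def interior_def by auto

lemma left_neighbour_mem:
  "l \<le> 1 \<Longrightarrow> left_neighbour n j l \<in> renewed n {} (aztec_white n) \<longleftrightarrow> 0 \<le> j - int l \<and> j - int l \<le> int (n - 1) - 1"
  using j n unfolding left_neighbour_def renewed_def aztec_white_def interior_def by auto

lemma sum_removed_white_neighbours:
  "(\<Sum>b\<in>{b\<in>renewed n {} (aztec_black n). (removed_white n i, b) \<in> aztec_edges}. h b)
    = (\<Sum>k\<le>1. if lower_neighbour n i k \<in> renewed n {} (aztec_black n) then h (lower_neighbour n i k) else 0)"
proof -
  have "{b\<in>renewed n {} (aztec_black n). (removed_white n i, b) \<in> aztec_edges}
      = {b\<in>lower_neighbour n i ` {..1}. b \<in> renewed n {} (aztec_black n)}"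
    unfolding renewed_def aztec_black_def aztec_edges_def adj_def removed_white_def lower_neighbour_def
    by (auto simp: atMost_Suc image_iff)
  moreover have "inj_on (lower_neighbour n i) {..1}"
    by (auto simp: inj_on_def lower_neighbour_def)
  ultimately show ?thesis by (simp add: sum.inter_filter sum.reindex)
qed

lemma sum_removed_black_neighbours:
  "(\<Sum>w\<in>{w\<in>renewed n {} (aztec_white n). (w, removed_black n j) \<in> aztec_edges}. h w)
    = (\<Sum>l\<le>1. if left_neighbour n j l \<in> renewed n {} (aztec_white n) then h (left_neighbour n j l) else 0)"
proof -
  have "{w\<in>renewed n {} (aztec_white n). (w, removed_black n j) \<in> aztec_edges}
      = {w\<in>left_neighbour n j ` {..1}. w \<in> renewed n {} (aztec_white n)}"
    unfolding renewed_def aztec_white_def aztec_edges_def adj_def removed_black_def left_neighbour_def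
    by (auto simp: atMost_Suc image_iff)
  moreover have "inj_on (left_neighbour n j) {..1}"
    by (auto simp: inj_on_def left_neighbour_def)
  ultimately show ?thesis by (simp add: sum.inter_filter sum.reindex)
qed

lemma removed_edges:
  "k \<le> 1 \<Longrightarrow> (removed_white n i, lower_neighbour n i k) \<in> aztec_edges"
  "l \<le> 1 \<Longrightarrow> (left_neighbour n j l, removed_black n j) \<in> aztec_edges"
  "(removed_white n i, removed_black n j) \<in> aztec_edges \<longleftrightarrow> i = 0 \<and> j = 0"
  using i j unfolding aztec_edges_def adj_def removed_white_def removed_black_def lower_neighbour_def
    left_neighbour_def by (auto simp: le_Suc_eq)

lemma removed_gauge:
  "q > 0 \<Longrightarrow> white_gauge a q (removed_white n i) * black_gauge q (removed_black n j) = q powi (i + j + 1) / (1 + a\<^sup>2 * q)"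
  unfolding white_gauge_def black_gauge_def removed_white_def removed_black_def
  by (simp add: power_int_add[symmetric] add.commute add.left_commute)

lemma qdiag_weight_lower_neighbour:
  assumes "q > 0" "k \<le> 1"
  shows "qdiag_weight (n - 1) 1 (a * q) q (shift (lower_neighbour n i k), shift (removed_white n i)) = a ^ k"
proof (cases "k = 0")
  case True
  have "(shift (lower_neighbour n i k), shift (removed_white n i))
      = ((2 * int n - 2 * i - 3, 2 * int n - 2), (2 * int n - 2 * i - 3 + 1, 2 * int n - 2 + 1))"
    unfolding shift_def lower_neighbour_def removed_white_def True by simp
  then show ?thesis using True by (simp only: qdiag_weight_NE) simp
next
  case False
  then have k: "k = 1" using assms(2) by simp
  have "(shift (lower_neighbour n i k), shift (removed_white n i))
      = ((2 * int n - 2 * i - 1, 2 * int n - 2), (2 * int n - 2 * i - 1 - 1, 2 * int n - 2 + 1))"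
    unfolding shift_def lower_neighbour_def removed_white_def k by simp
  moreover have "min ((2 * int (n - 1) - 1 - (2 * int n - 2 * i - 1)) div 2)
      ((2 * int (n - 1) - 1 - (2 * int n - 2 + 1)) div 2) = -1"
    using i n by (simp add: of_nat_diff)
  ultimately show ?thesis using k assms(1) by (simp only: qdiag_weight_NW) (simp add: power_int_minus)
qed

lemma qdiag_weight_left_neighbour:
  assumes "q > 0" "l \<le> 1"
  shows "qdiag_weight (n - 1) 1 (a * q) q (shift (removed_black n j), shift (left_neighbour n j l)) = a ^ l"
proof (cases "l = 0")
  case True
  have "(shift (removed_black n j), shift (left_neighbour n j l))
      = ((2 * int n - 1, 2 * int n - 2 * j - 2), (2 * int n - 1 - 1, 2 * int n - 2 * j - 2 - 1))"
    unfolding shift_def left_neighbour_def removed_black_def True by simp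
  then show ?thesis using True by (simp only: qdiag_weight_SW) simp
next
  case False
  then have l: "l = 1" using assms(2) by simp
  have "(shift (removed_black n j), shift (left_neighbour n j l))
      = ((2 * int n - 1, 2 * int n - 2 * j - 2), (2 * int n - 1 - 1, 2 * int n - 2 * j - 2 + 1))"
    unfolding shift_def left_neighbour_def removed_black_def l by simp
  moreover have "min ((2 * int (n - 1) - 1 - (2 * int n - 1)) div 2)
      ((2 * int (n - 1) - 1 - (2 * int n - 2 * j - 2 + 1)) div 2) = -1"
    using j n by (simp add: of_nat_diff)
  ultimately show ?thesis using l assms(1) by (simp only: qdiag_weight_NW) (simp add: power_int_minus)
qed

lemma qdiag_weight_removed_corner:
  assumes "q > 0" "i = 0" "j = 0"
  shows "qdiag_weight (n - 1) 1 (a * q) q (shift (removed_black n j), shift (removed_white n i)) = a"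
proof -
  have "(shift (removed_black n j), shift (removed_white n i))
      = ((2 * int n - 1, 2 * int n - 2), (2 * int n - 1 - 1, 2 * int n - 2 + 1))"
    unfolding shift_def removed_white_def removed_black_def assms(2,3) by simp
  moreover have "min ((2 * int (n - 1) - 1 - (2 * int n - 1)) div 2)
      ((2 * int (n - 1) - 1 - (2 * int n - 2 + 1)) div 2) = -1"
    using n by (simp add: of_nat_diff)
  ultimately show ?thesis using assms(1) by (simp only: qdiag_weight_NW) (simp add: power_int_minus)
qed

lemma sum_removed_neighbours:
  "(\<Sum>b\<in>{b\<in>renewed n {} (aztec_black n). (removed_white n i, b) \<in> aztec_edges}.
      \<Sum>w\<in>{w\<in>renewed n {} (aztec_white n). (w, removed_black n j) \<in> aztec_edges}. h b w)
    = (\<Sum>k\<le>1. \<Sum>l\<le>1. if lower_neighbour n i k \<in> renewed n {} (aztec_black n)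
        \<and> left_neighbour n j l \<in> renewed n {} (aztec_white n)
      then h (lower_neighbour n i k) (left_neighbour n j l) else 0)"
  unfolding sum_removed_white_neighbours sum_removed_black_neighbours
proof (intro sum.cong refl)
  fix k
  let ?P = "lower_neighbour n i k \<in> renewed n {} (aztec_black n)"
  show "(if ?P then \<Sum>l\<le>1. if left_neighbour n j l \<in> renewed n {} (aztec_white n)
        then h (lower_neighbour n i k) (left_neighbour n j l) else 0 else 0)
    = (\<Sum>l\<le>1. if ?P \<and> left_neighbour n j l \<in> renewed n {} (aztec_white n)
        then h (lower_neighbour n i k) (left_neighbour n j l) else 0)"
    by (cases ?P) simp_all
qed

lemma renewed_removed_pair:
  assumes q: "q > 0" and kl: "k \<le> 1" "l \<le> 1"
    and mem: "lower_neighbour n i k \<in> renewed n {} (aztec_black n)" "left_neighbour n j l \<in> renewed n {} (aztec_white n)"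
  shows "renewed_weight n a q (removed_white n i, lower_neighbour n i k)
      * renewed_weight n a q (left_neighbour n j l, removed_black n j)
      * dimer_Z (renewed n {} (aztec_white n) - {left_neighbour n j l})
          (renewed n {} (aztec_black n) - {lower_neighbour n i k}) aztec_edges (renewed_weight n a q)
    = q powi (i + j + 1) / (1 + a\<^sup>2 * q) * interior_gauge n a q
      * (a ^ (k + l) * Zdiag_rem (i - int k) (j - int l) (a * q) q (n - 1))"
proof -
  have "Zdiag_rem (i - int k) (j - int l) (a * q) q (n - 1)
      = dimer_Z (aztec_white (n - 1) - {shift (lower_neighbour n i k)})
          (aztec_black (n - 1) - {shift (left_neighbour n j l)}) aztec_edges (qdiag_weight (n - 1) 1 (a * q) q)"
    using lower_neighbour_mem[OF kl(1)] left_neighbour_mem[OF kl(2)] mem n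
    by (simp add: shift_lower_neighbour shift_left_neighbour Zdiag_rem_eq_dimer_Z)
  moreover note renewed_weight_pair[OF n q removed_white_boundary(1) mem(2,1)
      removed_edges(1)[OF kl(1)] removed_edges(2)[OF kl(2)], of a]
  ultimately show ?thesis
    unfolding qdiag_weight_lower_neighbour[OF q kl(1)] qdiag_weight_left_neighbour[OF q kl(2)]
    by (simp add: removed_gauge[OF q, symmetric] power_add)
qed

lemma renewed_removed_corner:
  assumes q: "q > 0"
  shows "(if (removed_white n i, removed_black n j) \<in> aztec_edges then
      renewed_weight n a q (removed_white n i, removed_black n j)
      * dimer_Z (renewed n {} (aztec_white n)) (renewed n {} (aztec_black n)) aztec_edges (renewed_weight n a q)
    else 0)
    = q powi (i + j + 1) / (1 + a\<^sup>2 * q) * interior_gauge n a q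
      * (a * (if (i, j) = (0, 0) then Zdiag (n - 1) 1 (a * q) q else 0))"
  using renewed_weight_eq[OF n q removed_white_boundary(1), of "removed_black n j" a] removed_edges(3)
    qdiag_weight_removed_corner[OF q] removed_gauge[OF q, symmetric]
  by (simp add: dimer_Z_renewed_interior[OF n q])

lemma dimer_Z_renewed_removed:
  assumes q: "q > 0"
  shows "dimer_Z (insert (removed_white n i) (renewed n {} (aztec_white n)))
      (insert (removed_black n j) (renewed n {} (aztec_black n))) aztec_edges (renewed_weight n a q)
    = q powi (i + j + 1) / (1 + a\<^sup>2 * q) * interior_gauge n a q
      * ((\<Sum>(k, l)\<in>{(k::nat, l::nat). k \<le> 1 \<and> l \<le> 1 \<and> (i - int k, j - int l) \<noteq> (-1, -1)}.
            a ^ (k + l) * Zdiag_rem (i - int k) (j - int l) (a * q) q (n - 1))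
         + a * (if (i, j) = (0, 0) then Zdiag (n - 1) 1 (a * q) q else 0))"
proof -
  let ?WH = "renewed n {} (aztec_white n)" and ?BH = "renewed n {} (aztec_black n)"
  let ?G = "q powi (i + j + 1) / (1 + a\<^sup>2 * q) * interior_gauge n a q"
  let ?Zr = "\<lambda>k l. Zdiag_rem (i - int k) (j - int l) (a * q) q (n - 1)"
  have fin: "finite ?WH" "finite ?BH"
    using finite_aztec_white finite_aztec_black by (simp_all add: renewed_def)
  have outside: "?Zr k l = 0" if "k \<le> 1" "l \<le> 1" "\<not> (lower_neighbour n i k \<in> ?BH \<and> left_neighbour n j l \<in> ?WH)" for k l
    using lower_neighbour_mem[of k] left_neighbour_mem[of l] that by (auto simp: Zdiag_rem_def)
  have "(\<Sum>(k, l)\<in>{(k::nat, l::nat). k \<le> 1 \<and> l \<le> 1 \<and> (i - int k, j - int l) \<noteq> (-1, -1)}. a ^ (k + l) * ?Zr k l)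
      = (\<Sum>k\<le>1. \<Sum>l\<le>1. a ^ (k + l) * ?Zr k l)"
    by (rule sum_shifted_index_pairs[OF i(1) j(1)]) (simp add: Zdiag_rem_def)
  then have "(\<Sum>k\<le>1. \<Sum>l\<le>1. ?G * (a ^ (k + l) * ?Zr k l)) = ?G
      * (\<Sum>(k, l)\<in>{(k::nat, l::nat). k \<le> 1 \<and> l \<le> 1 \<and> (i - int k, j - int l) \<noteq> (-1, -1)}. a ^ (k + l) * ?Zr k l)"
    by (simp only: sum_distrib_left)
  moreover have "dimer_Z (insert (removed_white n i) ?WH) (insert (removed_black n j) ?BH) aztec_edges (renewed_weight n a q)
      = (\<Sum>k\<le>1. \<Sum>l\<le>1. ?G * (a ^ (k + l) * ?Zr k l))
        + ?G * (a * (if (i, j) = (0, 0) then Zdiag (n - 1) 1 (a * q) q else 0))"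
    unfolding dimer_Z_insert_insert[OF fin renewed_removed(3,4)] sum_removed_neighbours
      renewed_removed_corner[OF q]
    using renewed_removed_pair[OF q] outside by (intro arg_cong2[where f = "(+)"] sum.cong refl) auto
  ultimately show ?thesis by (simp add: distrib_left)
qed

end

theorem lemma5p2:
  fixes a q :: real and n :: nat and i j :: int
  assumes "a > 0" and "q > 0" and "n \<ge> 1"
    and "0 \<le> i" and "i \<le> int n - 1" and "0 \<le> j" and "j \<le> int n - 1"
  shows "Zdiag_rem i j a q n / Zdiag n 1 a q =
    q powi (i + j + 1) *
      ((\<Sum>(k, l)\<in>{(k::nat, l::nat). k \<le> 1 \<and> l \<le> 1 \<and> (i - int k, j - int l) \<noteq> (-1, -1)}.
          a ^ (k + l) * Zdiag_rem (i - int k) (j - int l) (a * q) q (n - 1)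
            / ((1 + a\<^sup>2 * q) * Zdiag (n - 1) 1 (a * q) q))
       + a * (if (i, j) = (0, 0) \<and> n \<ge> 1 then 1 else 0) / (1 + a\<^sup>2 * q))"
proof -
  note a = assms(1) and q = assms(2) and n = assms(3) and ij = assms(4-7)
  define D where "D = 1 + a\<^sup>2 * q"
  define Z' where "Z' = Zdiag (n - 1) 1 (a * q) q"
  define S where "S = (\<Sum>(k, l)\<in>{(k::nat, l::nat). k \<le> 1 \<and> l \<le> 1 \<and> (i - int k, j - int l) \<noteq> (-1, -1)}.
    a ^ (k + l) * Zdiag_rem (i - int k) (j - int l) (a * q) q (n - 1))"
  have pos: "D > 0" "Z' > 0" "interior_gauge n a q > 0"
    using renewal_factor_pos[OF q] Zdiag_pos[of "a * q" q] interior_gauge_pos[OF q] a q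
    unfolding D_def Z'_def by simp_all
  have "Zdiag_rem i j a q n = D ^ card (aztec_faces n) * (q powi (i + j + 1) / D * interior_gauge n a q
      * (S + a * (if (i, j) = (0, 0) then Z' else 0)))"
    using Zdiag_rem_renewal[OF n ij q] dimer_Z_renewed_removed[OF n ij q] unfolding D_def Z'_def S_def by simp
  moreover have "Zdiag n 1 a q = D ^ card (aztec_faces n) * interior_gauge n a q * Z'"
    using Zdiag_recursion[OF n q] unfolding D_def Z'_def .
  moreover have "(\<Sum>(k, l)\<in>{(k::nat, l::nat). k \<le> 1 \<and> l \<le> 1 \<and> (i - int k, j - int l) \<noteq> (-1, -1)}.
      a ^ (k + l) * Zdiag_rem (i - int k) (j - int l) (a * q) q (n - 1) / (D * Z')) = S / (D * Z')"
    unfolding S_def sum_divide_distrib by (simp add: case_prod_unfold)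
  ultimately show ?thesis
    using pos n unfolding D_def[symmetric] Z'_def[symmetric] by (auto simp: field_simps)
qed

end
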